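(* Let $G$ be a finite simple graph with edge weight function $w$ and vertex weight function $w_1$, let $\theta$ be a real number, and let $A=A_{(\theta,w,w_1)}(G)$. Then (a) $A_{(\theta,w,w_1)}(G\setminus A)=\varnothing$, $D_{(\theta,w,w_1)}(G\setminus A)=D_{(\theta,w,w_1)}(G)$, $P_{(\theta,w,w_1)}(G\setminus A)=P_{(\theta,w,w_1)}(G)$, and $N_{(\theta,w,w_1)}(G\setminus A)=N_{(\theta,w,w_1)}(G)$; (b) $G\setminus A$ has exactly $|A|+\mathrm{mult}(\theta,G)$ components that are $(\theta,w,w_1)$-critical; (c) if $H$ is a component of $G\setminus A$, then either $H$ is $(\theta,w,w_1)$-critical or $\mathrm{mult}(\theta,H)=0$; (d) the subgraph induced by $D_{(\theta,w,w_1)}(G)$ consists of all the $(\theta,w,w_1)$-critical components of $G\setminus A$.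
   Context: An edge weight function $w$ assigns a nonzero complex number to each edge; a vertex weight function $w_1$ assigns a real number (possibly $0$) to each vertex. Subgraphs carry the restricted weights; $G\setminus u$ deletes vertex $u$ and its incident edges, and $G\setminus A$ deletes all vertices of $A$. For $B\subseteq E(G)$, $w(B)=\prod_{e\in B}w(e)$. $\mu_w(G,x)=\sum_{M}(-1)^{|M|}|w(M)|^2x^{n-2|M|}$ over all matchings $M$ (including empty), $n=|V(G)|$. $\eta_{(w,w_1)}(G,x)=\sum_{S\subseteq V(G)}(-1)^{|V(G)\setminus S|}\big(\prod_{v\in V(G)\setminus S}w_1(v)\big)\mu_w(G[S],x)$ with $G[S]$ the induced subgraph, and $\mu_w,\eta_{(w,w_1)}$ of the empty graph equal to $1$. $\mathrm{mult}(\theta,H)$ is the multiplicity of $\theta$ as a root of $\eta_{(w,w_1)}(H,x)$ ($0$ if not a root). A vertex $v$ of $H$ is $(\theta,w,w_1)$-essential / neutral / positive if $\mathrm{mult}(\theta,H\setminus v)$ equals $\mathrm{mult}(\theta,H)-1$ / $\mathrm{mult}(\theta,H)$ / $\mathrm{mult}(\theta,H)+1$; $v$ is $(\theta,w,w_1)$-special if not essential but adjacent to an essential vertex. $D_{(\theta,w,w_1)}(H)$, $A_{(\theta,w,w_1)}(H)$, $N_{(\theta,w,w_1)}(H)$ are the sets of essential, special, neutral vertices of $H$, and $P_{(\theta,w,w_1)}(H)$ is the set of positive vertices of $H$ that are not special. $H$ is $(\theta,w,w_1)$-critical if all its vertices are essential and $\mathrm{mult}(\theta,H)=1$. *)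

theory Defs
  imports Complex_Main "HOL-Computational_Algebra.Polynomial"
begin

type_synonym 'a graph = "'a set \<times> 'a set set"

definition verts :: "'a graph \<Rightarrow> 'a set" where "verts G = fst G"
definition edges :: "'a graph \<Rightarrow> 'a set set" where "edges G = snd G"

definition simple_graph :: "'a graph \<Rightarrow> bool" where
  "simple_graph G \<longleftrightarrow> finite (verts G) \<and>
     (\<forall>e\<in>edges G. \<exists>u v. u \<in> verts G \<and> v \<in> verts G \<and> u \<noteq> v \<and> e = {u, v})"

definition edge_weight :: "'a graph \<Rightarrow> ('a set \<Rightarrow> complex) \<Rightarrow> bool" where
  "edge_weight G w \<longleftrightarrow> (\<forall>e\<in>edges G. w e \<noteq> 0)"

definition induced :: "'a graph \<Rightarrow> 'a set \<Rightarrow> 'a graph" where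
  "induced G S = (verts G \<inter> S, {e \<in> edges G. e \<subseteq> S})"

definition del_set :: "'a graph \<Rightarrow> 'a set \<Rightarrow> 'a graph" where
  "del_set G A = induced G (verts G - A)"

definition del_vert :: "'a graph \<Rightarrow> 'a \<Rightarrow> 'a graph" where
  "del_vert G v = del_set G {v}"

definition adj :: "'a graph \<Rightarrow> 'a \<Rightarrow> 'a \<Rightarrow> bool" where
  "adj G u v \<longleftrightarrow> {u, v} \<in> edges G"

definition matchings :: "'a graph \<Rightarrow> 'a set set set" where
  "matchings G = {M. M \<subseteq> edges G \<and> (\<forall>e\<in>M. \<forall>f\<in>M. e \<noteq> f \<longrightarrow> e \<inter> f = {})}"

definition mu :: "('a set \<Rightarrow> complex) \<Rightarrow> 'a graph \<Rightarrow> real poly" where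
  "mu w G = (\<Sum>M\<in>matchings G.
      smult ((-1) ^ card M * (cmod (\<Prod>e\<in>M. w e))\<^sup>2)
            (monom 1 (card (verts G) - 2 * card M)))"

definition eta :: "('a set \<Rightarrow> complex) \<Rightarrow> ('a \<Rightarrow> real) \<Rightarrow> 'a graph \<Rightarrow> real poly" where
  "eta w w1 G = (\<Sum>S\<in>Pow (verts G).
      smult ((-1) ^ card (verts G - S) * (\<Prod>v\<in>verts G - S. w1 v))
            (mu w (induced G S)))"

definition mult :: "('a set \<Rightarrow> complex) \<Rightarrow> ('a \<Rightarrow> real) \<Rightarrow> real \<Rightarrow> 'a graph \<Rightarrow> nat" where
  "mult w w1 \<theta> G = order \<theta> (eta w w1 G)"

definition essential where
  "essential w w1 \<theta> H v \<longleftrightarrow> v \<in> verts H \<and>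
     int (mult w w1 \<theta> (del_vert H v)) = int (mult w w1 \<theta> H) - 1"

definition neutral where
  "neutral w w1 \<theta> H v \<longleftrightarrow> v \<in> verts H \<and>
     mult w w1 \<theta> (del_vert H v) = mult w w1 \<theta> H"

definition positive where
  "positive w w1 \<theta> H v \<longleftrightarrow> v \<in> verts H \<and>
     mult w w1 \<theta> (del_vert H v) = mult w w1 \<theta> H + 1"

definition special where
  "special w w1 \<theta> H v \<longleftrightarrow> v \<in> verts H \<and> \<not> essential w w1 \<theta> H v \<and>
     (\<exists>u. essential w w1 \<theta> H u \<and> adj H u v)"

definition Dset where "Dset w w1 \<theta> H = {v. essential w w1 \<theta> H v}"
definition Aset where "Aset w w1 \<theta> H = {v. special w w1 \<theta> H v}"
definition Nset where "Nset w w1 \<theta> H = {v. neutral w w1 \<theta> H v}"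
definition Pset where
  "Pset w w1 \<theta> H = {v. positive w w1 \<theta> H v \<and> \<not> special w w1 \<theta> H v}"

definition critical where
  "critical w w1 \<theta> H \<longleftrightarrow> (\<forall>v\<in>verts H. essential w w1 \<theta> H v) \<and> mult w w1 \<theta> H = 1"

definition components :: "'a graph \<Rightarrow> 'a set set" where
  "components G = {C. \<exists>v\<in>verts G. C = {u \<in> verts G. (adj G)\<^sup>*\<^sup>* v u}}"

end

theory Submission
  imports Defs
begin

text \<open>
  On vertex sets \<open>S\<close>, \<open>eta\<close> satisfies the matching-polynomial recurrence
  \<open>eta(S) = (x - w1 u) eta(S - u) - \<Sum>\<^sub>t |w(ut)|\<^sup>2 eta(S - u - t)\<close>. It yields a
  Heilmann--Lieb identity writing \<open>eta(S - u) eta(S - v) - eta(S) eta(S - u - v)\<close> as a nonnegative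
  combination of squares, so this difference is nonnegative near \<open>\<theta>\<close>. Comparing lowest Taylor
  coefficients at \<open>\<theta>\<close> then gives interlacing (deleting a vertex changes \<open>mult\<close> by at most one),
  parity constraints that replace Gallai's lemma, and sign information for the lowest coefficients.
  The latter shows that deleting a set \<open>Z\<close> raises \<open>mult\<close> by \<open>|Z|\<close> exactly when \<open>Z\<close> has a
  suitable matching into the rest, which yields the stability lemma: deleting a special vertex
  changes no class other than its own. The Gallai--Edmonds structure theorem, of which the corollary
  is a restatement, then follows by induction on the number of vertices as in Godsil's treatment of
  the matching polynomial.
\<close>

section \<open>Taylor coefficients at a point\<close>

definition taylor :: "real \<Rightarrow> real poly \<Rightarrow> real poly" where
  "taylor th p = pcompose p [:th, 1:]"

definition tcoeff :: "real \<Rightarrow> real poly \<Rightarrow> nat \<Rightarrow> real" where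
  "tcoeff th p n = coeff (taylor th p) n"

definition vanishes_to :: "real \<Rightarrow> real poly \<Rightarrow> nat \<Rightarrow> bool" where
  "vanishes_to th p n \<longleftrightarrow> (\<forall>i<n. tcoeff th p i = 0)"

lemma taylor_add [simp]: "taylor th (p + q) = taylor th p + taylor th q"
  by (simp add: taylor_def pcompose_add)

lemma taylor_diff [simp]: "taylor th (p - q) = taylor th p - taylor th q"
  by (simp add: taylor_def pcompose_diff)

lemma taylor_smult [simp]: "taylor th (smult c p) = smult c (taylor th p)"
  by (simp add: taylor_def pcompose_smult)

lemma taylor_mult [simp]: "taylor th (p * q) = taylor th p * taylor th q"
  by (simp add: taylor_def pcompose_mult)

lemma taylor_sum [simp]: "taylor th (sum f A) = (\<Sum>i\<in>A. taylor th (f i))"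
  by (simp add: taylor_def pcompose_sum)

lemma taylor_0 [simp]: "taylor th 0 = 0"
  by (simp add: taylor_def)

lemma taylor_power: "taylor th (p ^ n) = taylor th p ^ n"
  by (induct n) (simp_all add: taylor_def pcompose_1 pcompose_mult)

lemma pcompose_taylor: "pcompose (taylor th p) [:-th, 1:] = p"
proof -
  have "pcompose [:th, 1:] [:-th, 1:] = [:0, 1:]"
    by (simp add: pcompose_pCons)
  then show ?thesis
    unfolding taylor_def by (metis pcompose_assoc pcompose_idR)
qed

lemma taylor_eq_0_iff [simp]: "taylor th p = 0 \<longleftrightarrow> p = 0"
  by (metis pcompose_taylor taylor_0 pcompose_0)

lemma taylor_linear_power: "taylor th ([:-th, 1:] ^ n) = monom 1 n"
proof -
  have "taylor th [:-th, 1:] = [:0, 1:]"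
    by (simp add: taylor_def pcompose_pCons)
  then show ?thesis
    by (simp add: taylor_power monom_altdef)
qed

lemma linear_power_dvd_iff_monom_dvd_taylor:
  "[:-th, 1:] ^ n dvd p \<longleftrightarrow> monom 1 n dvd taylor th p"
proof
  assume "[:-th, 1:] ^ n dvd p"
  then obtain q where "p = [:-th, 1:] ^ n * q"
    by (auto elim: dvdE)
  then show "monom 1 n dvd taylor th p"
    by (simp add: taylor_linear_power)
next
  assume "monom 1 n dvd taylor th p"
  then obtain r where r: "taylor th p = monom 1 n * r"
    by (auto elim: dvdE)
  have "pcompose ([:0, 1:] ^ k) [:-th, 1:] = ([:-th, 1:] :: real poly) ^ k" for k
    by (induct k) (simp_all add: pcompose_1 pcompose_mult pcompose_pCons)
  then have "pcompose (monom (1::real) n) [:-th, 1:] = [:-th, 1:] ^ n"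
    by (simp add: monom_altdef)
  then have "p = [:-th, 1:] ^ n * pcompose r [:-th, 1:]"
    using pcompose_taylor[of th p] r by (simp add: pcompose_mult)
  then show "[:-th, 1:] ^ n dvd p"
    by simp
qed

lemma order_taylor: "order th p = order 0 (taylor th p)"
proof (cases "p = 0")
  case True
  then show ?thesis
    by (simp add: order_def)
next
  case False
  then have "n \<le> order th p \<longleftrightarrow> n \<le> order 0 (taylor th p)" for n
    using linear_power_dvd_iff_monom_dvd_taylor[of th n p]
      order_divides[of th n p] order_divides[of 0 n "taylor th p"]
    by (simp add: monom_altdef)
  then show ?thesis
    by (meson le_antisym order_refl)
qed

lemma coeffs_below_order_0:
  fixes q :: "real poly"
  assumes "q \<noteq> 0"
  shows "(\<forall>i<order 0 q. coeff q i = 0) \<and> coeff q (order 0 q) \<noteq> 0"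
proof -
  obtain r where r: "q = [:-0, 1:] ^ order 0 q * r" "\<not> [:-0, 1:] dvd r"
    using order_decomp[OF assms] by blast
  define k where "k = order 0 q"
  have "poly r 0 \<noteq> 0"
    using r(2) by (simp add: dvd_iff_poly_eq_0)
  then have "coeff r 0 \<noteq> 0"
    by (simp add: poly_0_coeff_0)
  moreover have "q = monom 1 k * r"
    using r(1) by (simp add: monom_altdef k_def)
  ultimately have "(\<forall>i<k. coeff q i = 0) \<and> coeff q k \<noteq> 0"
    by (simp add: coeff_monom_mult)
  then show ?thesis
    by (simp add: k_def)
qed


lemma vanishes_to_order:
  "p \<noteq> 0 \<Longrightarrow> vanishes_to th p (order th p) \<and> tcoeff th p (order th p) \<noteq> 0"
  using coeffs_below_order_0[of "taylor th p"] order_taylor[of th p]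
  by (simp add: vanishes_to_def tcoeff_def)

lemma vanishes_to_le_order: "p \<noteq> 0 \<Longrightarrow> vanishes_to th p n \<Longrightarrow> n \<le> order th p"
  using vanishes_to_order[of p th] unfolding vanishes_to_def by (meson not_le)

lemma order_eqI_tcoeff:
  assumes "vanishes_to th p n" "tcoeff th p n \<noteq> 0"
  shows "order th p = n"
proof -
  have p: "p \<noteq> 0"
    using assms(2) by (auto simp: tcoeff_def)
  have "n \<le> order th p"
    using vanishes_to_le_order[OF p assms(1)] .
  moreover have "\<not> n < order th p"
    using vanishes_to_order[OF p] assms(2) unfolding vanishes_to_def by blast
  ultimately show ?thesis
    by simp
qed

lemma vanishes_to_mono: "vanishes_to th p n \<Longrightarrow> m \<le> n \<Longrightarrow> vanishes_to th p m"
  by (auto simp: vanishes_to_def)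

lemma tcoeff_add [simp]: "tcoeff th (p + q) n = tcoeff th p n + tcoeff th q n"
  by (simp add: tcoeff_def)

lemma tcoeff_diff [simp]: "tcoeff th (p - q) n = tcoeff th p n - tcoeff th q n"
  by (simp add: tcoeff_def)

lemma tcoeff_smult [simp]: "tcoeff th (smult c p) n = c * tcoeff th p n"
  by (simp add: tcoeff_def)

lemma tcoeff_sum [simp]: "tcoeff th (sum f A) n = (\<Sum>i\<in>A. tcoeff th (f i) n)"
  by (simp add: tcoeff_def coeff_sum)

lemma tcoeff_0 [simp]: "tcoeff th 0 n = 0"
  by (simp add: tcoeff_def)

lemma vanishes_to_0 [simp]: "vanishes_to th p 0"
  by (simp add: vanishes_to_def)

lemma vanishes_to_diff:
  "vanishes_to th p n \<Longrightarrow> vanishes_to th q n \<Longrightarrow> vanishes_to th (p - q) n"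
  by (simp add: vanishes_to_def)

lemma vanishes_to_smult: "vanishes_to th p n \<Longrightarrow> vanishes_to th (smult c p) n"
  by (simp add: vanishes_to_def)

lemma vanishes_to_sum:
  "(\<And>i. i \<in> A \<Longrightarrow> vanishes_to th (f i) n) \<Longrightarrow> vanishes_to th (sum f A) n"
  by (simp add: vanishes_to_def)

lemma tcoeff_mult:
  "tcoeff th (p * q) n = (\<Sum>j\<le>n. tcoeff th p j * tcoeff th q (n - j))"
  by (simp add: tcoeff_def coeff_mult)

lemma vanishes_to_mult:
  assumes "vanishes_to th p a" "vanishes_to th q b"
  shows "vanishes_to th (p * q) (a + b)"
  unfolding vanishes_to_def
proof (intro allI impI)
  fix i assume "i < a + b"
  then have "tcoeff th p j * tcoeff th q (i - j) = 0" if "j \<le> i" for j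
    using assms that by (cases "j < a") (auto simp: vanishes_to_def)
  then show "tcoeff th (p * q) i = 0"
    unfolding tcoeff_mult by (intro sum.neutral) auto
qed

lemma tcoeff_mult_at_sum:
  assumes "vanishes_to th p a" "vanishes_to th q b"
  shows "tcoeff th (p * q) (a + b) = tcoeff th p a * tcoeff th q b"
proof -
  have "tcoeff th p j * tcoeff th q (a + b - j) = 0" if "j \<le> a + b" "j \<noteq> a" for j
    using assms that by (cases "j < a") (auto simp: vanishes_to_def)
  then have "(\<Sum>j\<in>{..a + b} - {a}. tcoeff th p j * tcoeff th q (a + b - j)) = 0"
    by (intro sum.neutral) auto
  then have "(\<Sum>j\<le>a + b. tcoeff th p j * tcoeff th q (a + b - j))
      = tcoeff th p a * tcoeff th q (a + b - a)"
    by (subst sum.remove[of _ a]) auto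
  then show ?thesis
    by (simp add: tcoeff_mult)
qed

lemma taylor_pderiv: "taylor th (pderiv p) = pderiv (taylor th p)"
  by (simp add: taylor_def pderiv_pcompose pderiv_pCons)

lemma tcoeff_pderiv: "tcoeff th (pderiv p) n = real (Suc n) * tcoeff th p (Suc n)"
  by (simp add: tcoeff_def taylor_pderiv coeff_pderiv)

lemma vanishes_to_pderiv: "vanishes_to th p (Suc n) \<Longrightarrow> vanishes_to th (pderiv p) n"
  by (auto simp: vanishes_to_def tcoeff_pderiv)

lemma vanishes_to_diff_min:
  "vanishes_to th p a \<Longrightarrow> vanishes_to th q b \<Longrightarrow> vanishes_to th (p - q) (min a b)"
  by (simp add: vanishes_to_def)

lemma tcoeff_diff_min:
  assumes "vanishes_to th p a" "tcoeff th p a \<noteq> 0" "vanishes_to th q b" "tcoeff th q b \<noteq> 0" "a \<noteq> b"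
  shows "tcoeff th (p - q) (min a b) \<noteq> 0"
  using assms by (cases "a < b") (auto simp: vanishes_to_def min_def)

text \<open>For \<open>p \<noteq> 0\<close> this says that the lowest nonzero Taylor coefficient of \<open>p\<close> at \<open>th\<close> is
  positive and has even index, i.e.\ that \<open>p \<ge> 0\<close> near \<open>th\<close>.\<close>

definition locally_nonneg :: "real \<Rightarrow> real poly \<Rightarrow> bool" where
  "locally_nonneg th p \<longleftrightarrow>
     (\<forall>n. vanishes_to th p n \<longrightarrow> tcoeff th p n \<ge> 0 \<and> (tcoeff th p n \<noteq> 0 \<longrightarrow> even n))"

lemma vanishes_to_add_locally_nonneg:
  assumes "locally_nonneg th p" "locally_nonneg th q" "vanishes_to th (p + q) n"
  shows "vanishes_to th p n \<and> vanishes_to th q n"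
  using assms(3)
proof (induct n)
  case (Suc n)
  then have p: "vanishes_to th p n" and q: "vanishes_to th q n"
    using vanishes_to_mono[OF Suc(2), of n] by auto
  have "tcoeff th p n \<ge> 0" "tcoeff th q n \<ge> 0"
    using p q assms(1,2) by (auto simp: locally_nonneg_def)
  moreover have "tcoeff th p n + tcoeff th q n = 0"
    using Suc(2) by (simp add: vanishes_to_def)
  ultimately show ?case
    using p q by (auto simp: vanishes_to_def less_Suc_eq)
qed simp

lemma locally_nonneg_add:
  assumes "locally_nonneg th p" "locally_nonneg th q"
  shows "locally_nonneg th (p + q)"
  unfolding locally_nonneg_def
proof (intro allI impI)
  fix n assume "vanishes_to th (p + q) n"
  then have "vanishes_to th p n" "vanishes_to th q n"
    using vanishes_to_add_locally_nonneg assms by blast+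
  then show "0 \<le> tcoeff th (p + q) n \<and> (tcoeff th (p + q) n \<noteq> 0 \<longrightarrow> even n)"
    using assms unfolding locally_nonneg_def by force
qed

lemma locally_nonneg_0 [simp]: "locally_nonneg th 0"
  by (simp add: locally_nonneg_def)

lemma locally_nonneg_smult: "c \<ge> 0 \<Longrightarrow> locally_nonneg th p \<Longrightarrow> locally_nonneg th (smult c p)"
  by (cases "c = 0") (auto simp: locally_nonneg_def vanishes_to_def)

lemma locally_nonneg_sum:
  "finite A \<Longrightarrow> (\<And>i. i \<in> A \<Longrightarrow> locally_nonneg th (f i)) \<Longrightarrow> locally_nonneg th (sum f A)"
  by (induct A rule: finite_induct) (auto intro: locally_nonneg_add)

lemma tcoeff_square_order:
  assumes "q \<noteq> 0"
  shows "vanishes_to th (q * q) (2 * order th q)"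
    and "tcoeff th (q * q) (2 * order th q) = (tcoeff th q (order th q))\<^sup>2"
  using vanishes_to_mult[of th q _ q] tcoeff_mult_at_sum[of th q _ q] vanishes_to_order[OF assms]
  by (simp_all add: mult_2 power2_eq_square)

lemma locally_nonneg_square: "locally_nonneg th (q * q)"
proof (cases "q = 0")
  case False
  note sq = tcoeff_square_order[OF False, of th]
  show ?thesis
    unfolding locally_nonneg_def
  proof (intro allI impI)
    fix n assume n: "vanishes_to th (q * q) n"
    consider "n < 2 * order th q" | "n = 2 * order th q" | "2 * order th q < n"
      by linarith
    then show "0 \<le> tcoeff th (q * q) n \<and> (tcoeff th (q * q) n \<noteq> 0 \<longrightarrow> even n)"
    proof cases
      case 3
      then have "tcoeff th (q * q) (2 * order th q) = 0"
        using n by (simp add: vanishes_to_def)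
      then show ?thesis
        using sq vanishes_to_order[OF False] by simp
    qed (use sq in \<open>auto simp: vanishes_to_def\<close>)
  qed
qed simp

lemma not_vanishes_to_add_square:
  assumes "locally_nonneg th p" "q \<noteq> 0" "c > 0"
  shows "\<not> vanishes_to th (p + smult c (q * q)) (2 * order th q + 1)"
proof
  assume "vanishes_to th (p + smult c (q * q)) (2 * order th q + 1)"
  then have "vanishes_to th (smult c (q * q)) (2 * order th q + 1)"
    using vanishes_to_add_locally_nonneg[OF assms(1) locally_nonneg_smult[OF _ locally_nonneg_square]]
      assms(3) by auto
  then have "tcoeff th (smult c (q * q)) (2 * order th q) = 0"
    by (simp add: vanishes_to_def)
  then have "c * (tcoeff th q (order th q))\<^sup>2 = 0"
    by (simp add: tcoeff_square_order(2)[OF assms(2)])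
  then show False
    using vanishes_to_order[OF assms(2)] assms(3) by simp
qed

lemma tcoeff_mult_pderiv:
  assumes "vanishes_to th g a" "vanishes_to th f k" "1 \<le> a + k"
  shows "vanishes_to th (g * pderiv f) (a + k - 1) \<and>
         tcoeff th (g * pderiv f) (a + k - 1) = real k * tcoeff th g a * tcoeff th f k"
proof (cases k)
  case 0
  have "vanishes_to th (g * pderiv f) (a + 0)"
    using vanishes_to_mult[OF assms(1), of "pderiv f" 0] by simp
  moreover have "a + k - 1 < a + 0"
    using 0 assms(3) by simp
  ultimately show ?thesis
    using 0 by (auto simp: vanishes_to_def)
next
  case (Suc k')
  have f': "vanishes_to th (pderiv f) k'"
    using vanishes_to_pderiv assms(2) Suc by blast
  have "tcoeff th (pderiv f) k' = real k * tcoeff th f k"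
    by (simp add: tcoeff_pderiv Suc)
  then show ?thesis
    using vanishes_to_mult[OF assms(1) f'] tcoeff_mult_at_sum[OF assms(1) f'] Suc by simp
qed

lemma tcoeff_wronskian:
  assumes "vanishes_to th f k" "vanishes_to th g a" "a \<noteq> k"
  shows "vanishes_to th (g * pderiv f - f * pderiv g) (a + k - 1) \<and>
         tcoeff th (g * pderiv f - f * pderiv g) (a + k - 1)
           = (real k - real a) * tcoeff th f k * tcoeff th g a"
proof -
  have "1 \<le> a + k"
    using assms(3) by arith
  then have "vanishes_to th (g * pderiv f) (a + k - 1) \<and>
         tcoeff th (g * pderiv f) (a + k - 1) = real k * tcoeff th g a * tcoeff th f k"
    and "vanishes_to th (f * pderiv g) (a + k - 1) \<and>
         tcoeff th (f * pderiv g) (a + k - 1) = real a * tcoeff th f k * tcoeff th g a"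
    using tcoeff_mult_pderiv[OF assms(2,1)] tcoeff_mult_pderiv[OF assms(1,2)]
    by (auto simp: add.commute)
  then show ?thesis
    by (auto intro: vanishes_to_diff simp: algebra_simps)
qed

section \<open>The vertex recurrence\<close>

lemma verts_induced: "verts (induced G S) = verts G \<inter> S"
  by (simp add: induced_def verts_def)

lemma edges_induced: "edges (induced G S) = {e \<in> edges G. e \<subseteq> S}"
  by (simp add: induced_def edges_def)

lemma induced_induced: "induced (induced G S) T = induced G (S \<inter> T)"
  by (auto simp: induced_def verts_def edges_def)

lemma smult_sum_right: "smult c (\<Sum>i\<in>A. f i) = (\<Sum>i\<in>A. smult c (f i))"
  by (induct A rule: infinite_finite_induct) (simp_all add: smult_add_right)

lemma pderiv_sum: "pderiv (\<Sum>i\<in>A. f i) = (\<Sum>i\<in>A. pderiv (f i))"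
  by (induct A rule: infinite_finite_induct) (simp_all add: pderiv_add)

locale weighted_graph =
  fixes G :: "'a graph" and w :: "'a set \<Rightarrow> complex" and w1 :: "'a \<Rightarrow> real" and th :: real
  assumes simple: "simple_graph G" and weight_nonzero: "edge_weight G w"
begin

abbreviation "V \<equiv> verts G"
abbreviation "E \<equiv> edges G"

definition eta_on :: "'a set \<Rightarrow> real poly" where
  "eta_on S = eta w w1 (induced G S)"

definition matchings_in :: "'a set \<Rightarrow> 'a set set set" where
  "matchings_in S = {M. M \<subseteq> E \<and> (\<forall>e\<in>M. e \<subseteq> S) \<and> (\<forall>e\<in>M. \<forall>f\<in>M. e \<noteq> f \<longrightarrow> e \<inter> f = {})}"

definition matching_weight :: "'a set set \<Rightarrow> real" where
  "matching_weight M = (-1) ^ card M * (cmod (\<Prod>e\<in>M. w e))\<^sup>2"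

definition vertex_factor :: "'a \<Rightarrow> real poly" where
  "vertex_factor v = [:- w1 v, 1:]"

text \<open>Summing out the vertex deletions in the definition of \<open>eta\<close> turns it into a matching
  polynomial in which every uncovered vertex \<open>v\<close> contributes \<open>x - w1 v\<close> instead of \<open>x\<close>.\<close>

definition matching_expansion :: "'a set \<Rightarrow> real poly" where
  "matching_expansion S =
     (\<Sum>M\<in>matchings_in S. smult (matching_weight M) (\<Prod>v\<in>S - \<Union>M. vertex_factor v))"

definition nbrs :: "'a set \<Rightarrow> 'a \<Rightarrow> 'a set" where
  "nbrs S u = {t \<in> S - {u}. {u, t} \<in> E}"

definition wsq :: "'a \<Rightarrow> 'a \<Rightarrow> real" where
  "wsq u t = (cmod (w {u, t}))\<^sup>2"

lemma finite_verts: "finite V"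
  using simple by (simp add: simple_graph_def)

lemma finite_subset_verts: "S \<subseteq> V \<Longrightarrow> finite S"
  using finite_verts finite_subset by blast

lemma edge_doubleton: "e \<in> E \<Longrightarrow> \<exists>u v. u \<in> V \<and> v \<in> V \<and> u \<noteq> v \<and> e = {u, v}"
  using simple by (auto simp: simple_graph_def)

lemma finite_edges: "finite E"
proof -
  have "E \<subseteq> Pow V"
    using edge_doubleton by blast
  then show ?thesis
    using finite_verts finite_subset by blast
qed

lemma card_edge: "e \<in> E \<Longrightarrow> card e = 2"
  using edge_doubleton by fastforce

lemma finite_nbrs: "S \<subseteq> V \<Longrightarrow> finite (nbrs S u)"
  by (rule finite_subset[OF _ finite_verts]) (auto simp: nbrs_def)

lemma wsq_pos: "{u, t} \<in> E \<Longrightarrow> wsq u t > 0"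
  using weight_nonzero by (simp add: wsq_def edge_weight_def)

lemma finite_matchings_in: "finite (matchings_in S)"
  by (rule finite_subset[of _ "Pow E"]) (auto simp: matchings_in_def finite_edges)

lemma finite_matching: "M \<in> matchings_in S \<Longrightarrow> finite M"
  using finite_edges finite_subset by (auto simp: matchings_in_def)

lemma card_Union_matching: "M \<in> matchings_in S \<Longrightarrow> card (\<Union>M) = 2 * card M"
proof -
  assume M: "M \<in> matchings_in S"
  have "pairwise disjnt M"
    using M by (auto simp: matchings_in_def pairwise_def disjnt_def)
  moreover have "finite A" if "A \<in> M" for A
    using M that edge_doubleton by (fastforce simp: matchings_in_def)
  ultimately have "card (\<Union>M) = sum card M"
    by (rule card_Union_disjoint)
  also have "\<dots> = sum (\<lambda>_. 2) M"
    using M card_edge by (intro sum.cong) (auto simp: matchings_in_def)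
  finally show ?thesis
    by simp
qed

lemma matchings_induced: "matchings (induced G S) = matchings_in S"
  by (auto simp: matchings_def matchings_in_def edges_induced)

lemma matchings_in_mono: "T \<subseteq> S \<Longrightarrow> matchings_in T = {M \<in> matchings_in S. \<Union>M \<subseteq> T}"
  by (auto simp: matchings_in_def)

lemma mu_induced:
  "T \<subseteq> V \<Longrightarrow> mu w (induced G T)
     = (\<Sum>M\<in>matchings_in T. smult (matching_weight M) (monom 1 (card T - 2 * card M)))"
  by (simp add: mu_def matchings_induced matching_weight_def verts_induced Int_absorb1)

lemma sum_supersets_monom:
  assumes "finite S" "U \<subseteq> S"
  shows "(\<Sum>T\<in>{T \<in> Pow S. U \<subseteq> T}. smult ((-1) ^ card (S - T) * (\<Prod>v\<in>S - T. w1 v))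
            (monom 1 (card T - card U))) = (\<Prod>v\<in>S - U. vertex_factor v)"
proof -
  define R where "R = S - U"
  have finR: "finite R"
    using assms R_def by simp
  have "(\<Prod>v\<in>R. vertex_factor v) = (\<Prod>v\<in>R. [:0, 1:] + [:- w1 v:])"
    by (simp add: vertex_factor_def)
  also have "\<dots> = (\<Sum>B\<in>Pow R. (\<Prod>v\<in>B. [:0, 1:]) * (\<Prod>v\<in>R - B. [:- w1 v:]))"
    by (rule prod_add[OF finR])
  also have "\<dots> = (\<Sum>B\<in>Pow R. smult ((-1) ^ card (R - B) * (\<Prod>v\<in>R - B. w1 v)) (monom 1 (card B)))"
    by (intro sum.cong refl) (simp add: monom_altdef prod_to_poly prod_uminus)
  also have "\<dots> = (\<Sum>T\<in>{T \<in> Pow S. U \<subseteq> T}. smult ((-1) ^ card (S - T) * (\<Prod>v\<in>S - T. w1 v))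
            (monom 1 (card T - card U)))"
  proof (rule sum.reindex_bij_witness[of _ "\<lambda>T. T - U" "\<lambda>B. U \<union> B"])
    fix B assume B: "B \<in> Pow R"
    have "U \<inter> B = {}"
      using B R_def by auto
    moreover have "finite U" "finite B"
      using assms B finR by (auto intro: finite_subset)
    ultimately have "card (U \<union> B) - card U = card B"
      by (simp add: card_Un_disjoint)
    moreover have "S - (U \<union> B) = R - B"
      using R_def by auto
    ultimately show "smult ((-1) ^ card (S - (U \<union> B)) * (\<Prod>v\<in>S - (U \<union> B). w1 v))
            (monom 1 (card (U \<union> B) - card U)) =
        smult ((-1) ^ card (R - B) * (\<Prod>v\<in>R - B. w1 v)) (monom 1 (card B))"
      by simp
  qed (use assms R_def in auto)
  finally show ?thesis
    using R_def by simp
qed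

lemma eta_on_eq_matching_expansion:
  assumes "S \<subseteq> V"
  shows "eta_on S = matching_expansion S"
proof -
  have fS: "finite S"
    using assms finite_subset_verts by blast
  define c where "c T = (-1::real) ^ card (S - T) * (\<Prod>v\<in>S - T. w1 v)" for T
  have "eta_on S = (\<Sum>T\<in>Pow S. smult (c T) (mu w (induced G T)))"
    unfolding eta_on_def eta_def c_def using assms
    by (intro sum.cong) (simp_all add: verts_induced induced_induced Int_absorb1)
  also have "\<dots> = (\<Sum>T\<in>Pow S. \<Sum>M\<in>{M \<in> matchings_in S. \<Union>M \<subseteq> T}.
        smult (c T * matching_weight M) (monom 1 (card T - 2 * card M)))"
  proof (intro sum.cong refl)
    fix T assume T: "T \<in> Pow S"
    then show "smult (c T) (mu w (induced G T)) = (\<Sum>M\<in>{M \<in> matchings_in S. \<Union>M \<subseteq> T}.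
        smult (c T * matching_weight M) (monom 1 (card T - 2 * card M)))"
      using assms by (simp add: mu_induced matchings_in_mono[of T S] smult_sum_right)
  qed
  also have "\<dots> = (\<Sum>M\<in>matchings_in S. \<Sum>T\<in>{T \<in> Pow S. \<Union>M \<subseteq> T}.
        smult (c T * matching_weight M) (monom 1 (card T - 2 * card M)))"
    using sum.swap_restrict[of "Pow S" "matchings_in S"
        "\<lambda>T M. smult (c T * matching_weight M) (monom 1 (card T - 2 * card M))"
        "\<lambda>T M. \<Union>M \<subseteq> T"] fS finite_matchings_in by simp
  also have "\<dots> = matching_expansion S"
    unfolding matching_expansion_def
  proof (intro sum.cong refl)
    fix M assume M: "M \<in> matchings_in S"
    have "\<Union>M \<subseteq> S"
      using M by (auto simp: matchings_in_def)
    have "(\<Sum>T\<in>{T \<in> Pow S. \<Union>M \<subseteq> T}.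
          smult (c T * matching_weight M) (monom 1 (card T - 2 * card M)))
        = smult (matching_weight M)
            (\<Sum>T\<in>{T \<in> Pow S. \<Union>M \<subseteq> T}. smult (c T) (monom 1 (card T - card (\<Union>M))))"
      using card_Union_matching[OF M] by (simp add: smult_sum_right mult.commute)
    also have "\<dots> = smult (matching_weight M) (\<Prod>v\<in>S - \<Union>M. vertex_factor v)"
      using sum_supersets_monom[OF fS \<open>\<Union>M \<subseteq> S\<close>] by (simp add: c_def)
    finally show "(\<Sum>T\<in>{T \<in> Pow S. \<Union>M \<subseteq> T}.
          smult (c T * matching_weight M) (monom 1 (card T - 2 * card M)))
        = smult (matching_weight M) (\<Prod>v\<in>S - \<Union>M. vertex_factor v)" .
  qed
  finally show ?thesis .
qed


lemma matching_weight_insert: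
  "finite M \<Longrightarrow> e \<notin> M \<Longrightarrow> matching_weight (insert e M) = - (cmod (w e))\<^sup>2 * matching_weight M"
  by (simp add: matching_weight_def norm_mult power_mult_distrib)

lemma bij_betw_matchings_covering:
  assumes "u \<in> S"
  shows "bij_betw (\<lambda>(t, M). insert {u, t} M)
           (SIGMA t:nbrs S u. matchings_in (S - {u} - {t})) {M \<in> matchings_in S. u \<in> \<Union>M}"
  unfolding bij_betw_def
proof (intro conjI inj_onI subset_antisym subsetI)
  fix x y
  assume x: "x \<in> (SIGMA t:nbrs S u. matchings_in (S - {u} - {t}))"
    and y: "y \<in> (SIGMA t:nbrs S u. matchings_in (S - {u} - {t}))"
    and eq: "(\<lambda>(t, M). insert {u, t} M) x = (\<lambda>(t, M). insert {u, t} M) y"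
  obtain t M where xt: "x = (t, M)"
    by (cases x)
  obtain t' M' where yt: "y = (t', M')"
    by (cases y)
  have uM: "u \<notin> \<Union>M" "u \<notin> \<Union>M'"
    using x y xt yt by (auto simp: matchings_in_def)
  have ins: "insert {u, t} M = insert {u, t'} M'"
    using eq xt yt by simp
  then have "{u, t} \<in> insert {u, t'} M'"
    by blast
  then have "{u, t} = {u, t'}"
    using uM by auto
  then have "t = t'"
    by (metis doubleton_eq_iff)
  moreover have "{u, t} \<notin> M" "{u, t} \<notin> M'"
    using uM by auto
  ultimately have "M = M'"
    using ins by (metis insert_ident)
  then show "x = y"
    using xt yt \<open>t = t'\<close> by simp
next
  fix M assume "M \<in> (\<lambda>(t, M). insert {u, t} M) ` (SIGMA t:nbrs S u. matchings_in (S - {u} - {t}))"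
  then obtain t M' where t: "t \<in> nbrs S u" and M': "M' \<in> matchings_in (S - {u} - {t})"
    and M: "M = insert {u, t} M'"
    by auto
  have "{u, t} \<in> E" "{u, t} \<subseteq> S"
    using t assms by (auto simp: nbrs_def)
  then show "M \<in> {M \<in> matchings_in S. u \<in> \<Union>M}"
    using M M' by (auto simp: matchings_in_def)
next
  fix M assume M: "M \<in> {M \<in> matchings_in S. u \<in> \<Union>M}"
  then obtain e where e: "e \<in> M" "u \<in> e" and eE: "e \<in> E" "e \<subseteq> S"
    by (auto simp: matchings_in_def)
  then obtain t where t: "e = {u, t}" "t \<noteq> u"
    using edge_doubleton by fastforce
  have "f \<subseteq> S - {u} - {t}" if "f \<in> M - {e}" for f
  proof -
    have "f \<subseteq> S" "f \<inter> e = {}"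
      using M e(1) that by (auto simp: matchings_in_def)
    then show ?thesis
      using t by auto
  qed
  then have "M - {e} \<in> matchings_in (S - {u} - {t})"
    using M by (auto simp: matchings_in_def)
  moreover have "t \<in> nbrs S u"
    using eE t by (auto simp: nbrs_def)
  moreover have "M = insert {u, t} (M - {e})"
    using e(1) t by auto
  ultimately show "M \<in> (\<lambda>(t, M). insert {u, t} M) ` (SIGMA t:nbrs S u. matchings_in (S - {u} - {t}))"
    by (intro image_eqI[of M _ "(t, M - {e})"]) auto
qed

lemma matching_expansion_remove_vertex:
  assumes "S \<subseteq> V" "u \<in> S"
  shows "matching_expansion S = vertex_factor u * matching_expansion (S - {u})
           - (\<Sum>t\<in>nbrs S u. smult (wsq u t) (matching_expansion (S - {u} - {t})))"
proof -
  define f where "f M = smult (matching_weight M) (\<Prod>v\<in>S - \<Union>M. vertex_factor v)" for M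
  define uncovered where "uncovered = {M \<in> matchings_in S. u \<notin> \<Union>M}"
  define covered where "covered = {M \<in> matchings_in S. u \<in> \<Union>M}"
  have fS: "finite S"
    using assms(1) finite_subset_verts by blast
  have split: "matchings_in S = uncovered \<union> covered" "uncovered \<inter> covered = {}"
    by (auto simp: uncovered_def covered_def)
  have fin: "finite uncovered" "finite covered"
    using finite_matchings_in by (auto simp: uncovered_def covered_def)
  have "matching_expansion S = sum f uncovered + sum f covered"
    unfolding matching_expansion_def f_def[symmetric] split(1)
    by (rule sum.union_disjoint[OF fin split(2)])
  moreover have "sum f uncovered = vertex_factor u * matching_expansion (S - {u})"
  proof -
    have "uncovered = matchings_in (S - {u})"
      by (auto simp: uncovered_def matchings_in_def)
    moreover have "f M = vertex_factor u * smult (matching_weight M) (\<Prod>v\<in>S - {u} - \<Union>M. vertex_factor v)"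
      if "M \<in> matchings_in (S - {u})" for M
    proof -
      have "S - \<Union>M = insert u (S - {u} - \<Union>M)"
        using that assms(2) by (auto simp: matchings_in_def)
      then show ?thesis
        using fS by (simp add: f_def mult_smult_right)
    qed
    ultimately show ?thesis
      by (simp add: matching_expansion_def sum_distrib_left)
  qed
  moreover have "sum f covered = - (\<Sum>t\<in>nbrs S u. smult (wsq u t) (matching_expansion (S - {u} - {t})))"
  proof -
    have "sum f covered
        = (\<Sum>x\<in>(SIGMA t:nbrs S u. matchings_in (S - {u} - {t})). f ((\<lambda>(t, M). insert {u, t} M) x))"
      unfolding covered_def
      by (rule sum.reindex_bij_betw[symmetric, OF bij_betw_matchings_covering[OF assms(2)]])
    also have "\<dots> = (\<Sum>t\<in>nbrs S u. \<Sum>M\<in>matchings_in (S - {u} - {t}). f (insert {u, t} M))"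
      using finite_nbrs[OF assms(1)] finite_matchings_in by (subst sum.Sigma) (auto simp: split_def)
    also have "\<dots> = (\<Sum>t\<in>nbrs S u. - smult (wsq u t) (matching_expansion (S - {u} - {t})))"
    proof (intro sum.cong refl)
      fix t assume t: "t \<in> nbrs S u"
      have "f (insert {u, t} M) = - smult (wsq u t)
               (smult (matching_weight M) (\<Prod>v\<in>S - {u} - {t} - \<Union>M. vertex_factor v))"
        if M: "M \<in> matchings_in (S - {u} - {t})" for M
      proof -
        have "{u, t} \<notin> M"
          using M by (auto simp: matchings_in_def)
        then have "matching_weight (insert {u, t} M) = - wsq u t * matching_weight M"
          using matching_weight_insert finite_matching[OF M] by (simp add: wsq_def)
        moreover have "S - \<Union>(insert {u, t} M) = S - {u} - {t} - \<Union>M"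
          by auto
        ultimately show ?thesis
          by (simp add: f_def)
      qed
      then show "(\<Sum>M\<in>matchings_in (S - {u} - {t}). f (insert {u, t} M))
          = - smult (wsq u t) (matching_expansion (S - {u} - {t}))"
        by (simp add: matching_expansion_def smult_sum_right sum_negf)
    qed
    finally show ?thesis
      by (simp add: sum_negf)
  qed
  ultimately show ?thesis
    by simp
qed

lemma eta_on_remove_vertex:
  assumes "S \<subseteq> V" "u \<in> S"
  shows "eta_on S = vertex_factor u * eta_on (S - {u})
           - (\<Sum>t\<in>nbrs S u. smult (wsq u t) (eta_on (S - {u} - {t})))"
proof -
  have "S - {u} \<subseteq> V" "\<And>t. S - {u} - {t} \<subseteq> V"
    using assms by auto
  then show ?thesis
    using matching_expansion_remove_vertex[OF assms] by (simp add: eta_on_eq_matching_expansion assms)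
qed

lemma eta_on_empty: "eta_on {} = 1"
proof -
  have "M = {}" if "M \<in> matchings_in {}" for M
    using that card_edge by (force simp: matchings_in_def)
  then have "matchings_in {} = {{}}"
    by (auto simp: matchings_in_def)
  then show ?thesis
    using eta_on_eq_matching_expansion[of "{}"] by (simp add: matching_expansion_def matching_weight_def)
qed


lemma eta_on_remove_vertex_diff:
  assumes "S \<subseteq> V" "u \<in> S" "v \<noteq> u"
  shows "eta_on (S - {v}) = vertex_factor u * eta_on (S - {u} - {v})
           - (\<Sum>t\<in>nbrs S u - {v}. smult (wsq u t) (eta_on (S - {u} - {t} - {v})))"
proof -
  have "S - {v} \<subseteq> V" "u \<in> S - {v}"
    using assms by auto
  moreover have "nbrs (S - {v}) u = nbrs S u - {v}"
    by (auto simp: nbrs_def)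
  moreover have "S - {v} - {u} = S - {u} - {v}"
    by auto
  moreover have "S - {v} - {u} - {t} = S - {u} - {t} - {v}" for t
    by auto
  ultimately show ?thesis
    using eta_on_remove_vertex[of "S - {v}" u] by simp
qed

lemma eta_on_monic:
  "S \<subseteq> V \<Longrightarrow> degree (eta_on S) \<le> card S \<and> coeff (eta_on S) (card S) = 1"
proof (induct "card S" arbitrary: S rule: less_induct)
  case less
  show ?case
  proof (cases "S = {}")
    case True
    then show ?thesis
      by (simp add: eta_on_empty)
  next
    case False
    then obtain u where u: "u \<in> S"
      by blast
    have fS: "finite S"
      using less(2) finite_subset_verts by blast
    define n where "n = card (S - {u})"
    have cS: "card S = Suc n"
      using u fS n_def by (metis card_Suc_Diff1)
    have IH1: "degree (eta_on (S - {u})) \<le> n \<and> coeff (eta_on (S - {u})) n = 1"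
      using less(1)[of "S - {u}"] cS less(2) n_def by auto
    have IH2: "degree (eta_on (S - {u} - {t})) < n" if t: "t \<in> nbrs S u" for t
    proof -
      have "t \<in> S - {u}"
        using t by (auto simp: nbrs_def)
      then have "n = Suc (card (S - {u} - {t}))"
        using fS n_def by (metis card_Suc_Diff1 finite_Diff)
      moreover have "degree (eta_on (S - {u} - {t})) \<le> card (S - {u} - {t})"
        using less(1)[of "S - {u} - {t}"] less(2) cS calculation by auto
      ultimately show ?thesis
        by linarith
    qed
    define R where "R = (\<Sum>t\<in>nbrs S u. smult (wsq u t) (eta_on (S - {u} - {t})))"
    have cR: "coeff R k = 0" if "n \<le> k" for k
      unfolding R_def coeff_sum
    proof (intro sum.neutral ballI)
      fix t assume "t \<in> nbrs S u"
      then have "degree (eta_on (S - {u} - {t})) < k"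
        using IH2 that by (meson less_le_trans)
      then show "coeff (smult (wsq u t) (eta_on (S - {u} - {t}))) k = 0"
        by (simp add: coeff_eq_0)
    qed
    have c1: "coeff (eta_on (S - {u})) k = 0" if "n < k" for k
      using IH1 that by (simp add: coeff_eq_0)
    have eq: "eta_on S = pCons 0 (eta_on (S - {u})) - smult (w1 u) (eta_on (S - {u})) - R"
      using eta_on_remove_vertex[OF less(2) u] R_def by (simp add: vertex_factor_def algebra_simps)
    have "coeff (eta_on S) k = 0" if k: "Suc n < k" for k
    proof -
      obtain k' where "k = Suc k'" "n < k'"
        using k by (cases k) auto
      then show ?thesis
        unfolding eq using c1 cR by simp
    qed
    then have "degree (eta_on S) \<le> card S"
      using cS by (intro degree_le) auto
    moreover have "coeff (eta_on S) (card S) = 1"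
      unfolding eq cS using IH1 c1 cR by simp
    ultimately show ?thesis
      by simp
  qed
qed

lemma eta_on_nonzero: "S \<subseteq> V \<Longrightarrow> eta_on S \<noteq> 0"
  using eta_on_monic[of S] by auto

lemma pderiv_eta_on: "S \<subseteq> V \<Longrightarrow> pderiv (eta_on S) = (\<Sum>v\<in>S. eta_on (S - {v}))"
proof (induct "card S" arbitrary: S rule: less_induct)
  case less
  show ?case
  proof (cases "S = {}")
    case True
    then show ?thesis
      by (simp add: eta_on_empty)
  next
    case False
    then obtain u where u: "u \<in> S"
      by blast
    have fS: "finite S"
      using less(2) finite_subset_verts by blast
    define N where "N = nbrs S u"
    have fN: "finite N"
      using finite_nbrs less(2) N_def by blast
    have IH: "pderiv (eta_on T) = (\<Sum>v\<in>T. eta_on (T - {v}))" if "T \<subseteq> S - {u}" for T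
    proof -
      have "card T < card S"
        using that u fS by (meson Diff_subset card_Diff1_less dual_order.strict_trans2 card_mono finite_Diff)
      then show ?thesis
        using less that by blast
    qed
    have "pderiv (eta_on S) = eta_on (S - {u}) + vertex_factor u * pderiv (eta_on (S - {u}))
        - (\<Sum>t\<in>N. smult (wsq u t) (pderiv (eta_on (S - {u} - {t}))))"
      using eta_on_remove_vertex[OF less(2) u]
      by (simp add: pderiv_mult vertex_factor_def pderiv_pCons pderiv_sum pderiv_smult pderiv_diff N_def)
    also have "\<dots> = eta_on (S - {u}) + vertex_factor u * (\<Sum>v\<in>S - {u}. eta_on (S - {u} - {v}))
        - (\<Sum>t\<in>N. smult (wsq u t) (\<Sum>v\<in>S - {u} - {t}. eta_on (S - {u} - {t} - {v})))"
      using IH[of "S - {u}"] IH[of "S - {u} - {_}"] by auto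
    also have "\<dots> = eta_on (S - {u}) + (\<Sum>v\<in>S - {u}. eta_on (S - {v}))"
    proof -
      define F where "F v t = smult (wsq u t) (eta_on (S - {u} - {t} - {v}))" for v t
      have "(\<Sum>v\<in>S - {u}. \<Sum>t\<in>{t \<in> N. t \<noteq> v}. F v t) = (\<Sum>t\<in>N. \<Sum>v\<in>{v \<in> S - {u}. t \<noteq> v}. F v t)"
        using fS fN by (intro sum.swap_restrict) auto
      moreover have "N - {v} = {t \<in> N. t \<noteq> v}" "{v \<in> S - {u}. t \<noteq> v} = S - {u} - {t}" for v t
        by auto
      ultimately have swap: "(\<Sum>v\<in>S - {u}. \<Sum>t\<in>N - {v}. F v t) = (\<Sum>t\<in>N. \<Sum>v\<in>S - {u} - {t}. F v t)"
        by simp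
      have "eta_on (S - {v}) = vertex_factor u * eta_on (S - {u} - {v}) - (\<Sum>t\<in>N - {v}. F v t)"
        if "v \<in> S - {u}" for v
        using eta_on_remove_vertex_diff[OF less(2) u] that by (simp add: F_def N_def)
      then show ?thesis
        using swap by (simp add: F_def sum_subtractf sum_distrib_left smult_sum_right)
    qed
    also have "\<dots> = (\<Sum>v\<in>S. eta_on (S - {v}))"
      using u fS by (simp add: sum.remove)
    finally show ?thesis .
  qed
qed

lemma eta_on_split:
  "T \<subseteq> S \<Longrightarrow> S \<subseteq> V \<Longrightarrow> (\<forall>x\<in>T. \<forall>y\<in>S - T. {x, y} \<notin> E)
     \<Longrightarrow> eta_on S = eta_on T * eta_on (S - T)"
proof (induct "card T" arbitrary: S T rule: less_induct)
  case less
  show ?case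
  proof (cases "T = {}")
    case True
    then show ?thesis
      by (simp add: eta_on_empty)
  next
    case False
    then obtain u where u: "u \<in> T"
      by blast
    have fT: "finite T"
      using less(2,3) finite_subset_verts by blast
    have IH: "eta_on (S - A) = eta_on (T - A) * eta_on (S - T)" if "u \<in> A" "A \<subseteq> T" for A
    proof -
      have "card (T - A) < card T"
        using fT u that by (intro psubset_card_mono) auto
      moreover have "S - A - (T - A) = S - T"
        using that by auto
      ultimately show ?thesis
        using less(1)[of "T - A" "S - A"] less(2-4) by auto
    qed
    have "eta_on (S - {u} - {t}) = eta_on (T - {u} - {t}) * eta_on (S - T)" if "t \<in> nbrs T u" for t
    proof -
      have "S - {u} - {t} = S - {u, t}" "T - {u} - {t} = T - {u, t}"
        by auto
      then show ?thesis
        using IH[of "{u, t}"] that u by (auto simp: nbrs_def)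
    qed
    moreover have "nbrs S u = nbrs T u"
      using less(2,4) u by (auto simp: nbrs_def)
    ultimately have "eta_on S = vertex_factor u * (eta_on (T - {u}) * eta_on (S - T))
        - (\<Sum>t\<in>nbrs T u. smult (wsq u t) (eta_on (T - {u} - {t}) * eta_on (S - T)))"
      using eta_on_remove_vertex[OF less(3), of u] IH[of "{u}"] u less(2) by auto
    also have "\<dots> = (vertex_factor u * eta_on (T - {u})
        - (\<Sum>t\<in>nbrs T u. smult (wsq u t) (eta_on (T - {u} - {t})))) * eta_on (S - T)"
      by (simp add: algebra_simps sum_distrib_right sum_distrib_left mult_smult_right)
    also have "\<dots> = eta_on T * eta_on (S - T)"
      using eta_on_remove_vertex[of T u] less(2,3) u by auto
    finally show ?thesis .
  qed
qed

section \<open>Interlacing\<close>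

definition mult_on :: "'a set \<Rightarrow> nat" where
  "mult_on S = order th (eta_on S)"

lemma vanishes_to_mult_on:
  "S \<subseteq> V \<Longrightarrow> vanishes_to th (eta_on S) (mult_on S) \<and> tcoeff th (eta_on S) (mult_on S) \<noteq> 0"
  using vanishes_to_order eta_on_nonzero mult_on_def by metis

lemma mult_on_ge: "S \<subseteq> V \<Longrightarrow> vanishes_to th (eta_on S) n \<Longrightarrow> n \<le> mult_on S"
  using vanishes_to_le_order eta_on_nonzero mult_on_def by metis

lemma mult_on_split:
  "T \<subseteq> S \<Longrightarrow> S \<subseteq> V \<Longrightarrow> (\<forall>x\<in>T. \<forall>y\<in>S - T. {x, y} \<notin> E)
     \<Longrightarrow> mult_on S = mult_on T + mult_on (S - T)"
  using eta_on_split[of T S] eta_on_nonzero[of S] unfolding mult_on_def by (simp add: order_mult)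

lemma vanishes_to_mult_mult_on:
  assumes "S \<subseteq> V" "T \<subseteq> V"
  shows "vanishes_to th (eta_on S * eta_on T) (mult_on S + mult_on T)"
    and "tcoeff th (eta_on S * eta_on T) (mult_on S + mult_on T) \<noteq> 0"
  using vanishes_to_mult tcoeff_mult_at_sum vanishes_to_mult_on[OF assms(1)] vanishes_to_mult_on[OF assms(2)]
  by auto

text \<open>The Heilmann--Lieb difference. Being a nonnegative combination of squares, it is locally
  nonnegative at \<open>th\<close>; this is where all the interlacing and parity facts below come from.\<close>

definition hl_diff :: "'a set \<Rightarrow> 'a \<Rightarrow> 'a \<Rightarrow> real poly" where
  "hl_diff S u v = eta_on (S - {u}) * eta_on (S - {v}) - eta_on S * eta_on (S - {u} - {v})"

lemma hl_diff_recurrence: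
  assumes "S \<subseteq> V" "u \<in> S" "v \<in> S" "u \<noteq> v"
  shows "hl_diff S u v = (\<Sum>t\<in>nbrs S u - {v}. smult (wsq u t) (hl_diff (S - {u}) t v)) +
     (if {u, v} \<in> E then smult (wsq u v) (eta_on (S - {u} - {v}) * eta_on (S - {u} - {v})) else 0)"
proof -
  define N where "N = nbrs S u"
  have fN: "finite N"
    using finite_nbrs assms N_def by blast
  have r1: "eta_on S = vertex_factor u * eta_on (S - {u})
      - (\<Sum>t\<in>N. smult (wsq u t) (eta_on (S - {u} - {t})))"
    using eta_on_remove_vertex assms N_def by blast
  have r2: "eta_on (S - {v}) = vertex_factor u * eta_on (S - {u} - {v})
      - (\<Sum>t\<in>N - {v}. smult (wsq u t) (eta_on (S - {u} - {t} - {v})))"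
    unfolding N_def by (rule eta_on_remove_vertex_diff) (use assms in auto)
  have split: "(\<Sum>t\<in>N. smult (wsq u t) (eta_on (S - {u} - {t})))
      = (\<Sum>t\<in>N - {v}. smult (wsq u t) (eta_on (S - {u} - {t})))
        + (if {u, v} \<in> E then smult (wsq u v) (eta_on (S - {u} - {v})) else 0)"
  proof (cases "v \<in> N")
    case True
    then show ?thesis
      using fN by (auto simp: N_def nbrs_def sum.remove add.commute)
  next
    case False
    then show ?thesis
      using assms by (auto simp: N_def nbrs_def)
  qed
  have "hl_diff (S - {u}) t v
      = eta_on (S - {u} - {t}) * eta_on (S - {u} - {v}) - eta_on (S - {u}) * eta_on (S - {u} - {t} - {v})"
    for t
    by (simp add: hl_diff_def)
  then show ?thesis
    unfolding hl_diff_def r1 r2 split N_def[symmetric]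
    by (simp add: algebra_simps sum_distrib_left sum_distrib_right sum_subtractf mult_smult_left
        mult_smult_right smult_sum_right smult_diff_right)
qed

lemma locally_nonneg_hl_diff:
  "S \<subseteq> V \<Longrightarrow> u \<in> S \<Longrightarrow> v \<in> S \<Longrightarrow> u \<noteq> v \<Longrightarrow> locally_nonneg th (hl_diff S u v)"
proof (induct "card S" arbitrary: S u v rule: less_induct)
  case less
  have smaller: "card (S - {u}) < card S"
    using finite_subset_verts[OF less(2)] less(3) by (meson card_Diff1_less)
  have "locally_nonneg th (hl_diff (S - {u}) t v)" if "t \<in> nbrs S u - {v}" for t
    using less(1)[OF smaller, of t v] less(2-5) that by (auto simp: nbrs_def)
  then have "locally_nonneg th (\<Sum>t\<in>nbrs S u - {v}. smult (wsq u t) (hl_diff (S - {u}) t v))"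
    using finite_nbrs[OF less(2)] by (intro locally_nonneg_sum locally_nonneg_smult) (auto simp: wsq_def)
  moreover have "locally_nonneg th
      (if {u, v} \<in> E then smult (wsq u v) (eta_on (S - {u} - {v}) * eta_on (S - {u} - {v})) else 0)"
    by (auto intro: locally_nonneg_smult locally_nonneg_square simp: wsq_def)
  ultimately show ?case
    using hl_diff_recurrence[OF less(2-5)] by (simp add: locally_nonneg_add)
qed

lemma not_vanishes_to_hl_diff_edge:
  assumes "S \<subseteq> V" "u \<in> S" "v \<in> S" "u \<noteq> v" "{u, v} \<in> E"
  shows "\<not> vanishes_to th (hl_diff S u v) (2 * mult_on (S - {u} - {v}) + 1)"
proof -
  have "locally_nonneg th (hl_diff (S - {u}) t v)" if "t \<in> nbrs S u - {v}" for t
    using assms that by (intro locally_nonneg_hl_diff) (auto simp: nbrs_def)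
  then have "locally_nonneg th (\<Sum>t\<in>nbrs S u - {v}. smult (wsq u t) (hl_diff (S - {u}) t v))"
    using finite_nbrs[OF assms(1)] by (intro locally_nonneg_sum locally_nonneg_smult) (auto simp: wsq_def)
  moreover have "eta_on (S - {u} - {v}) \<noteq> 0"
    using assms by (intro eta_on_nonzero) auto
  ultimately show ?thesis
    using not_vanishes_to_add_square[OF _ _ wsq_pos[OF assms(5)]] hl_diff_recurrence[OF assms(1-4)] assms(5)
    by (simp add: mult_on_def)
qed

definition wronskian_on :: "'a set \<Rightarrow> 'a \<Rightarrow> real poly" where
  "wronskian_on S u = eta_on (S - {u}) * pderiv (eta_on S) - eta_on S * pderiv (eta_on (S - {u}))"

lemma wronskian_on_eq:
  assumes "S \<subseteq> V" "u \<in> S"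
  shows "wronskian_on S u = eta_on (S - {u}) * eta_on (S - {u}) + (\<Sum>v\<in>S - {u}. hl_diff S u v)"
proof -
  have "pderiv (eta_on S) = eta_on (S - {u}) + (\<Sum>v\<in>S - {u}. eta_on (S - {v}))"
    using pderiv_eta_on[OF assms(1)] assms(2) finite_subset_verts[OF assms(1)] by (simp add: sum.remove)
  moreover have "pderiv (eta_on (S - {u})) = (\<Sum>v\<in>S - {u}. eta_on (S - {u} - {v}))"
    using pderiv_eta_on[of "S - {u}"] assms by auto
  ultimately show ?thesis
    unfolding wronskian_on_def hl_diff_def by (simp add: algebra_simps sum_distrib_left sum_subtractf)
qed

lemma locally_nonneg_sum_hl_diff:
  assumes "S \<subseteq> V" "u \<in> S"
  shows "locally_nonneg th (\<Sum>v\<in>S - {u}. hl_diff S u v)"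
  using assms finite_subset_verts[OF assms(1)] by (intro locally_nonneg_sum locally_nonneg_hl_diff) auto

lemma mult_on_le_delete:
  assumes "S \<subseteq> V" "u \<in> S"
  shows "mult_on S \<le> mult_on (S - {u}) + 1"
proof (rule ccontr)
  assume c: "\<not> mult_on S \<le> mult_on (S - {u}) + 1"
  define k where "k = mult_on S"
  define a where "a = mult_on (S - {u})"
  have f: "vanishes_to th (eta_on S) k"
    using vanishes_to_mult_on[OF assms(1)] k_def by auto
  have g: "vanishes_to th (eta_on (S - {u})) a" "tcoeff th (eta_on (S - {u})) a \<noteq> 0"
    using vanishes_to_mult_on[of "S - {u}"] assms a_def by auto
  have "a \<noteq> k"
    using c a_def k_def by simp
  then have "vanishes_to th (wronskian_on S u) (a + k - 1)"
    using tcoeff_wronskian[OF f g(1)] by (simp add: wronskian_on_def)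
  then have "vanishes_to th (eta_on (S - {u}) * eta_on (S - {u})) (a + k - 1)"
    using vanishes_to_add_locally_nonneg[OF locally_nonneg_square locally_nonneg_sum_hl_diff[OF assms]]
      wronskian_on_eq[OF assms] by auto
  moreover have "a + a < a + k - 1"
    using c a_def k_def by simp
  ultimately have "tcoeff th (eta_on (S - {u}) * eta_on (S - {u})) (a + a) = 0"
    by (simp add: vanishes_to_def)
  then show False
    using tcoeff_mult_at_sum[OF g(1) g(1)] g(2) by simp
qed

lemma essential_tcoeff_sign:
  assumes "S \<subseteq> V" "u \<in> S" "mult_on (S - {u}) + 1 = mult_on S"
  shows "tcoeff th (eta_on S) (mult_on S) * tcoeff th (eta_on (S - {u})) (mult_on (S - {u})) > 0"
proof -
  define k where "k = mult_on S"
  define a where "a = mult_on (S - {u})"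
  have f: "vanishes_to th (eta_on S) k" "tcoeff th (eta_on S) k \<noteq> 0"
    using vanishes_to_mult_on[OF assms(1)] k_def by auto
  have g: "vanishes_to th (eta_on (S - {u})) a" "tcoeff th (eta_on (S - {u})) a \<noteq> 0"
    using vanishes_to_mult_on[of "S - {u}"] assms a_def by auto
  have ka: "real k - real a = 1" "a \<noteq> k"
    using assms(3) a_def k_def by auto
  have W: "vanishes_to th (wronskian_on S u) (a + k - 1)"
    "tcoeff th (wronskian_on S u) (a + k - 1)
       = (real k - real a) * tcoeff th (eta_on S) k * tcoeff th (eta_on (S - {u})) a"
    using tcoeff_wronskian[OF f(1) g(1) ka(2)] by (simp_all add: wronskian_on_def)
  have "locally_nonneg th (wronskian_on S u)"
    using wronskian_on_eq[OF assms(1,2)]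
      locally_nonneg_add[OF locally_nonneg_square locally_nonneg_sum_hl_diff[OF assms(1,2)]] by simp
  then have "tcoeff th (wronskian_on S u) (a + k - 1) \<ge> 0"
    using W(1) by (simp add: locally_nonneg_def)
  then show ?thesis
    using W(2) ka(1) f(2) g(2) k_def a_def by (simp add: less_le)
qed

lemma mult_on_delete_le:
  assumes "S \<subseteq> V" "u \<in> S"
  shows "mult_on (S - {u}) \<le> mult_on S + 1"
proof -
  define a where "a = mult_on (S - {u})"
  have SU: "S - {u} \<subseteq> V"
    using assms by auto
  have "vanishes_to th (eta_on (S - {u})) (a - 1)"
    using vanishes_to_mult_on[OF SU] a_def vanishes_to_mono by (metis diff_le_self)
  then have "vanishes_to th (vertex_factor u * eta_on (S - {u})) (0 + (a - 1))"
    using vanishes_to_mult[OF vanishes_to_0] by blast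
  moreover have "vanishes_to th (eta_on (S - {u} - {t})) (a - 1)" if "t \<in> nbrs S u" for t
  proof -
    have "a - 1 \<le> mult_on (S - {u} - {t})"
      using mult_on_le_delete[OF SU, of t] that a_def by (auto simp: nbrs_def)
    then show ?thesis
      using vanishes_to_mult_on[of "S - {u} - {t}"] assms vanishes_to_mono by blast
  qed
  then have "vanishes_to th (\<Sum>t\<in>nbrs S u. smult (wsq u t) (eta_on (S - {u} - {t}))) (a - 1)"
    by (simp add: vanishes_to_sum vanishes_to_smult)
  ultimately have "vanishes_to th (eta_on S) (a - 1)"
    using eta_on_remove_vertex[OF assms] by (simp add: vanishes_to_diff)
  then have "a - 1 \<le> mult_on S"
    using mult_on_ge assms by blast
  then show ?thesis
    using a_def by simp
qed

lemma Diff_commute_singletons: "S - {v} - {u} = S - {u} - {v}"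
  by auto

lemma mult_on_delete_pair:
  assumes "S \<subseteq> V" "u \<in> S" "v \<in> S" "u \<noteq> v"
  shows "mult_on (S - {u}) \<le> mult_on (S - {u} - {v}) + 1" "mult_on (S - {u} - {v}) \<le> mult_on (S - {u}) + 1"
    "mult_on (S - {v}) \<le> mult_on (S - {u} - {v}) + 1" "mult_on (S - {u} - {v}) \<le> mult_on (S - {v}) + 1"
    "mult_on S \<le> mult_on (S - {u}) + 1" "mult_on (S - {u}) \<le> mult_on S + 1"
    "mult_on S \<le> mult_on (S - {v}) + 1" "mult_on (S - {v}) \<le> mult_on S + 1"
proof -
  have a: "S - {u} \<subseteq> V" "v \<in> S - {u}" "S - {v} \<subseteq> V" "u \<in> S - {v}"
    using assms by auto
  show "mult_on (S - {u}) \<le> mult_on (S - {u} - {v}) + 1"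
    "mult_on (S - {u} - {v}) \<le> mult_on (S - {u}) + 1"
    using mult_on_le_delete[OF a(1,2)] mult_on_delete_le[OF a(1,2)] .
  show "mult_on (S - {v}) \<le> mult_on (S - {u} - {v}) + 1"
    "mult_on (S - {u} - {v}) \<le> mult_on (S - {v}) + 1"
    using mult_on_le_delete[OF a(3,4)] mult_on_delete_le[OF a(3,4)]
    by (simp_all add: Diff_commute_singletons)
  show "mult_on S \<le> mult_on (S - {u}) + 1" "mult_on (S - {u}) \<le> mult_on S + 1"
    "mult_on S \<le> mult_on (S - {v}) + 1" "mult_on (S - {v}) \<le> mult_on S + 1"
    using mult_on_le_delete mult_on_delete_le assms by blast+
qed

text \<open>The order at which \<open>hl_diff S u v\<close> starts, unless the two products in it start at the same
  order.\<close>

definition hl_order :: "'a set \<Rightarrow> 'a \<Rightarrow> 'a \<Rightarrow> nat" where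
  "hl_order S u v = min (mult_on (S - {u}) + mult_on (S - {v})) (mult_on S + mult_on (S - {u} - {v}))"

lemma vanishes_to_hl_order:
  assumes "S \<subseteq> V" "u \<in> S" "v \<in> S"
  shows "vanishes_to th (hl_diff S u v) (hl_order S u v)"
    and "mult_on (S - {u}) + mult_on (S - {v}) \<noteq> mult_on S + mult_on (S - {u} - {v})
           \<Longrightarrow> tcoeff th (hl_diff S u v) (hl_order S u v) \<noteq> 0"
proof -
  have "S - {u} \<subseteq> V" "S - {v} \<subseteq> V" "S - {u} - {v} \<subseteq> V"
    using assms by auto
  note A = vanishes_to_mult_mult_on[OF this(1,2)] and B = vanishes_to_mult_mult_on[OF assms(1) this(3)]
  show "vanishes_to th (hl_diff S u v) (hl_order S u v)"
    unfolding hl_diff_def hl_order_def using A(1) B(1) by (rule vanishes_to_diff_min)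
  show "tcoeff th (hl_diff S u v) (hl_order S u v) \<noteq> 0"
    if "mult_on (S - {u}) + mult_on (S - {v}) \<noteq> mult_on S + mult_on (S - {u} - {v})"
    unfolding hl_diff_def hl_order_def using A B that by (rule tcoeff_diff_min)
qed

lemma even_hl_order:
  assumes "S \<subseteq> V" "u \<in> S" "v \<in> S" "u \<noteq> v"
    "mult_on (S - {u}) + mult_on (S - {v}) \<noteq> mult_on S + mult_on (S - {u} - {v})"
  shows "even (hl_order S u v)"
  using locally_nonneg_hl_diff[OF assms(1-4)] vanishes_to_hl_order[OF assms(1-3)] assms(5)
  unfolding locally_nonneg_def by blast

lemma hl_order_edge_le:
  assumes "S \<subseteq> V" "u \<in> S" "v \<in> S" "u \<noteq> v" "{u, v} \<in> E"
  shows "hl_order S u v \<le> 2 * mult_on (S - {u} - {v})"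
proof (rule ccontr)
  assume "\<not> ?thesis"
  then have "2 * mult_on (S - {u} - {v}) + 1 \<le> hl_order S u v"
    by linarith
  then have "vanishes_to th (hl_diff S u v) (2 * mult_on (S - {u} - {v}) + 1)"
    using vanishes_to_mono[OF vanishes_to_hl_order(1)[OF assms(1-3)]] by blast
  then show False
    using not_vanishes_to_hl_diff_edge[OF assms] by blast
qed

lemma essential_delete_nonessential:
  assumes "S \<subseteq> V" "u \<in> S" "v \<in> S" "u \<noteq> v"
    "mult_on (S - {v}) + 1 = mult_on S" "mult_on (S - {u}) + 1 \<noteq> mult_on S"
  shows "mult_on (S - {u} - {v}) + 1 = mult_on (S - {u})"
proof (rule ccontr)
  assume c: "\<not> ?thesis"
  note bounds = mult_on_delete_pair[OF assms(1-4)]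
  then have same: "mult_on (S - {u}) = mult_on S" "mult_on (S - {u} - {v}) = mult_on S"
    using c assms(5,6) by arith+
  then have "even (hl_order S u v)"
    using assms(5) by (intro even_hl_order[OF assms(1-4)]) simp
  moreover have "hl_order S u v = 2 * mult_on (S - {v}) + 1"
    using same assms(5) by (simp add: hl_order_def)
  ultimately show False
    by simp
qed

lemma not_adjacent_essential_neutral:
  assumes "S \<subseteq> V" "u \<in> S" "v \<in> S" "u \<noteq> v" "{u, v} \<in> E"
    "mult_on (S - {u}) + 1 = mult_on S" "mult_on (S - {v}) = mult_on S"
  shows False
proof -
  have "mult_on (S - {v} - {u}) + 1 = mult_on (S - {v})"
    using essential_delete_nonessential[of S v u] assms by simp
  then have "mult_on (S - {u} - {v}) + 1 = mult_on S"
    using assms(7) by (simp add: Diff_commute_singletons)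
  then show False
    using hl_order_edge_le[OF assms(1-5)] assms(6,7) by (simp add: hl_order_def)
qed

lemma essential_adjacent_essential:
  assumes "S \<subseteq> V" "u \<in> S" "v \<in> S" "u \<noteq> v" "{u, v} \<in> E"
    "mult_on (S - {u}) + 1 = mult_on S" "mult_on (S - {v}) + 1 = mult_on S"
  shows "mult_on (S - {u} - {v}) + 1 \<noteq> mult_on (S - {u})"
  using hl_order_edge_le[OF assms(1-5)] assms(6,7) by (simp add: hl_order_def)

lemma adjacent_essential_positive:
  assumes "S \<subseteq> V" "u \<in> S" "a \<in> S" "u \<noteq> a" "{u, a} \<in> E"
    "mult_on (S - {u}) + 1 = mult_on S" "mult_on (S - {a}) + 1 \<noteq> mult_on S"
  shows "mult_on (S - {a}) = mult_on S + 1"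
proof -
  have "mult_on (S - {a}) \<noteq> mult_on S"
    using not_adjacent_essential_neutral[OF assms(1-6)] by blast
  then show ?thesis
    using mult_on_delete_pair[OF assms(1-4)] assms(7) by arith
qed

lemma positive_pair_delete:
  assumes "S \<subseteq> V" "u \<in> S" "v \<in> S" "u \<noteq> v"
    "mult_on (S - {u}) = mult_on S + 1" "mult_on (S - {v}) = mult_on S + 1"
  shows "mult_on (S - {u} - {v}) \<noteq> mult_on S + 1"
proof
  assume c: "mult_on (S - {u} - {v}) = mult_on S + 1"
  then have "even (hl_order S u v)"
    using assms(5,6) by (intro even_hl_order[OF assms(1-4)]) simp
  moreover have "hl_order S u v = 2 * mult_on S + 1"
    using c assms(5,6) by (simp add: hl_order_def)
  ultimately show False
    by simp
qed

lemma exists_essential: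
  assumes "S \<subseteq> V" "mult_on S \<ge> 1"
  shows "\<exists>v\<in>S. mult_on (S - {v}) + 1 = mult_on S"
proof (rule ccontr)
  assume none: "\<not> ?thesis"
  have "vanishes_to th (eta_on (S - {v})) (mult_on S)" if v: "v \<in> S" for v
  proof -
    have "mult_on S \<le> mult_on (S - {v})"
      using mult_on_le_delete[OF assms(1) v] none v by fastforce
    then show ?thesis
      using vanishes_to_mult_on[of "S - {v}"] assms(1) vanishes_to_mono by blast
  qed
  then have "vanishes_to th (pderiv (eta_on S)) (mult_on S)"
    using pderiv_eta_on[OF assms(1)] by (simp add: vanishes_to_sum)
  then have "tcoeff th (pderiv (eta_on S)) (mult_on S - 1) = 0"
    using assms(2) by (simp add: vanishes_to_def)
  then show False
    using tcoeff_pderiv[of th "eta_on S" "mult_on S - 1"] assms vanishes_to_mult_on[OF assms(1)] by simp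
qed

lemma mult_on_delete_set:
  assumes "S \<subseteq> V" "finite F"
  shows "mult_on (S - F) \<le> mult_on S + card (F \<inter> S) \<and> mult_on S \<le> mult_on (S - F) + card (F \<inter> S)"
  using assms(2)
proof (induct F rule: finite_induct)
  case (insert x F)
  show ?case
  proof (cases "x \<in> S")
    case True
    have xs: "x \<in> S - F" "S - F \<subseteq> V"
      using True insert(2) assms(1) by auto
    have "S - insert x F = S - F - {x}" "card (insert x F \<inter> S) = card (F \<inter> S) + 1"
      using insert True by (auto simp: Int_insert_left)
    then show ?thesis
      using mult_on_le_delete[OF xs(2,1)] mult_on_delete_le[OF xs(2,1)] insert(3) by simp
  next
    case False
    then have "S - insert x F = S - F" "insert x F \<inter> S = F \<inter> S"
      by auto
    then show ?thesis
      using insert(3) by simp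
  qed
qed simp

section \<open>Deleting sets of vertices\<close>

definition separated :: "'a set \<Rightarrow> 'a set \<Rightarrow> bool" where
  "separated T K \<longleftrightarrow> (\<forall>x\<in>K. \<forall>y\<in>T - K. {x, y} \<notin> E)"

lemma mult_on_separated:
  "K \<subseteq> T \<Longrightarrow> T \<subseteq> V \<Longrightarrow> separated T K \<Longrightarrow> mult_on T = mult_on K + mult_on (T - K)"
  by (rule mult_on_split) (auto simp: separated_def)

lemma separated_diff: "separated T K \<Longrightarrow> separated (T - Y) (K - Y)"
  by (auto simp: separated_def)

lemma separated_complement: "separated T K \<Longrightarrow> separated T (T - K)"
  unfolding separated_def by (metis DiffD1 DiffD2 DiffI insert_commute)

lemma separated_trans: "separated T B \<Longrightarrow> separated B K \<Longrightarrow> K \<subseteq> B \<Longrightarrow> separated T K"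
  unfolding separated_def by blast

text \<open>\<open>Z\<close> can be matched into \<open>S - Z\<close> such that deleting the matched partners lowers the
  multiplicity of \<open>S - Z\<close> by \<open>|Z|\<close>. By \<open>mult_on_delete_set_iff\<close> below this happens exactly when
  deleting \<open>Z\<close> from \<open>S\<close> raises the multiplicity by \<open>|Z|\<close>.\<close>

definition raising_matching :: "'a set \<Rightarrow> 'a set \<Rightarrow> bool" where
  "raising_matching S Z \<longleftrightarrow> (\<exists>f. inj_on f Z \<and> (\<forall>z\<in>Z. f z \<in> S - Z \<and> {z, f z} \<in> E) \<and>
      mult_on (S - Z - f ` Z) + card Z = mult_on (S - Z))"

definition matching_partner :: "'a set \<Rightarrow> 'a set \<Rightarrow> 'a \<Rightarrow> 'a \<Rightarrow> bool" where
  "matching_partner S Z z t \<longleftrightarrow> t \<notin> Z \<and> mult_on (S - Z - {t}) + 1 = mult_on (S - Z) \<and>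
     raising_matching (S - {z} - {t}) (Z - {z})"

lemma matching_partner_of_raising_matching:
  assumes "raising_matching S Z" "finite Z" "z \<in> Z" "S \<subseteq> V"
  shows "\<exists>t\<in>nbrs S z. matching_partner S Z z t"
proof -
  define Z' where "Z' = Z - {z}"
  obtain f where f: "inj_on f Z" "\<forall>z\<in>Z. f z \<in> S - Z \<and> {z, f z} \<in> E"
      "mult_on (S - Z - f ` Z) + card Z = mult_on (S - Z)"
    using assms(1) by (auto simp: raising_matching_def)
  define t where "t = f z"
  have tSZ: "t \<in> S - Z" "{z, t} \<in> E"
    using f(2) assms(3) t_def by auto
  have fZ': "finite Z'"
    using assms(2) Z'_def by simp
  have cZ: "card Z = Suc (card Z')"
    using assms(2,3) Z'_def by (metis card_Suc_Diff1)
  have t_notin: "t \<notin> f ` Z'"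
    using f(1) assms(3) Z'_def t_def by (auto simp: inj_on_def)
  have "mult_on (S - Z - {t}) \<le> mult_on (S - Z - {t} - f ` Z') + card (f ` Z' \<inter> (S - Z - {t}))"
    using mult_on_delete_set[of "S - Z - {t}" "f ` Z'"] assms(4) fZ' by auto
  also have "card (f ` Z' \<inter> (S - Z - {t})) \<le> card Z'"
    using card_mono[OF finite_imageI[OF fZ'] Int_lower1, of f "S - Z - {t}"] card_image_le[OF fZ', of f]
    by linarith
  finally have h1: "mult_on (S - Z - {t}) \<le> mult_on (S - Z - {t} - f ` Z') + card Z'"
    by simp
  have h2: "mult_on (S - Z) \<le> mult_on (S - Z - {t}) + 1"
    using mult_on_le_delete[OF _ tSZ(1)] assms(4) by auto
  have "f ` Z = insert t (f ` Z')"
    using assms(3) Z'_def t_def by auto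
  then have h3: "mult_on (S - Z - {t} - f ` Z') + card Z' + 1 = mult_on (S - Z)"
    using f(3) cZ by (simp add: set_diff_eq insert_absorb)
  have ess: "mult_on (S - Z - {t}) + 1 = mult_on (S - Z)"
    using h1 h2 h3 by arith
  have sets: "S - {z} - {t} - Z' = S - Z - {t}"
    using assms(3) Z'_def by auto
  have "raising_matching (S - {z} - {t}) Z'"
    unfolding raising_matching_def
  proof (intro exI conjI)
    show "inj_on f Z'"
      using f(1) Z'_def by (auto intro: inj_on_subset)
    show "\<forall>z'\<in>Z'. f z' \<in> S - {z} - {t} - Z' \<and> {z', f z'} \<in> E"
      using f(2) Z'_def t_notin assms(3) by auto
    show "mult_on (S - {z} - {t} - Z' - f ` Z') + card Z' = mult_on (S - {z} - {t} - Z')"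
      unfolding sets using h1 h2 h3 ess by simp
  qed
  then have "matching_partner S Z z t"
    using tSZ ess Z'_def by (simp add: matching_partner_def)
  moreover have "t \<in> nbrs S z"
    using tSZ assms(3) by (auto simp: nbrs_def)
  ultimately show ?thesis
    by blast
qed

lemma raising_matching_of_matching_partner:
  assumes "matching_partner S Z z t" "t \<in> nbrs S z" "finite Z" "z \<in> Z"
  shows "raising_matching S Z"
proof -
  define Z' where "Z' = Z - {z}"
  have tZ: "t \<notin> Z" and ess: "mult_on (S - Z - {t}) + 1 = mult_on (S - Z)"
    and ex: "raising_matching (S - {z} - {t}) Z'"
    using assms(1) Z'_def by (auto simp: matching_partner_def)
  have tSZ: "t \<in> S - Z" "{z, t} \<in> E"
    using assms(2) tZ by (auto simp: nbrs_def)
  obtain f where f: "inj_on f Z'" "\<forall>z'\<in>Z'. f z' \<in> S - {z} - {t} - Z' \<and> {z', f z'} \<in> E"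
      "mult_on (S - {z} - {t} - Z' - f ` Z') + card Z' = mult_on (S - {z} - {t} - Z')"
    using ex by (auto simp: raising_matching_def)
  define g where "g = f(z := t)"
  have ZZ: "Z = insert z Z'" "z \<notin> Z'"
    using assms(4) Z'_def by auto
  have gZ': "g ` Z' = f ` Z'"
    using ZZ(2) g_def by (auto simp: image_def)
  have t_notin: "t \<notin> f ` Z'"
    using f(2) by force
  have cZ: "card Z = Suc (card Z')"
    using assms(3,4) Z'_def by (metis card_Suc_Diff1)
  have sets: "S - {z} - {t} - Z' = S - Z - {t}"
    using ZZ by auto
  show ?thesis
    unfolding raising_matching_def
  proof (intro exI conjI)
    have "inj_on g Z'"
      using f(1) ZZ(2) g_def by (simp add: inj_on_def)
    then show "inj_on g Z"
      using t_notin gZ' ZZ by (simp add: g_def)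
    show "\<forall>z'\<in>Z. g z' \<in> S - Z \<and> {z', g z'} \<in> E"
      using tSZ f(2) ZZ by (auto simp: g_def)
    have "S - Z - g ` Z = S - {z} - {t} - Z' - f ` Z'"
      using gZ' ZZ by (auto simp: g_def)
    then show "mult_on (S - Z - g ` Z) + card Z = mult_on (S - Z)"
      using f(3) ess cZ sets by simp
  qed
qed


lemma pos_mult_sign_transfer:
  fixes a b c :: real
  assumes "b * c > 0" "a * c > 0"
  shows "a * b > 0"
proof -
  have "(a * b) * (c * c) > 0"
    using mult_pos_pos[OF assms(2,1)] by (simp add: algebra_simps)
  then show ?thesis
    by (simp add: zero_less_mult_iff)
qed

definition lowest_tcoeff :: "'a set \<Rightarrow> real" where
  "lowest_tcoeff T = tcoeff th (eta_on T) (mult_on T)"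

lemma lowest_tcoeff_nonzero: "T \<subseteq> V \<Longrightarrow> lowest_tcoeff T \<noteq> 0"
  using vanishes_to_mult_on by (simp add: lowest_tcoeff_def)

text \<open>Used with \<open>n + |Z| = mult_on (S - Z)\<close>. The sign part is what makes the induction on
  \<open>|Z|\<close> work: it prevents the contributions of the neighbours of a vertex of \<open>Z\<close> from cancelling.\<close>

definition tcoeff_delete_law :: "'a set \<Rightarrow> 'a set \<Rightarrow> nat \<Rightarrow> bool" where
  "tcoeff_delete_law S Z n \<longleftrightarrow> vanishes_to th (eta_on S) n \<and>
     (tcoeff th (eta_on S) n \<noteq> 0 \<longleftrightarrow> raising_matching S Z) \<and>
     (raising_matching S Z \<longrightarrow> (-1) ^ card Z * tcoeff th (eta_on S) n * lowest_tcoeff (S - Z) > 0)"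

lemma tcoeff_delete_law_empty:
  assumes "S \<subseteq> V"
  shows "tcoeff_delete_law S {} (mult_on S)"
proof -
  have "raising_matching S {}"
    by (simp add: raising_matching_def)
  moreover have "lowest_tcoeff S * lowest_tcoeff S > 0"
    using lowest_tcoeff_nonzero[OF assms] not_real_square_gt_zero by blast
  ultimately show ?thesis
    using vanishes_to_mult_on[OF assms] by (simp add: tcoeff_delete_law_def lowest_tcoeff_def)
qed

text \<open>The induction step of \<open>tcoeff_delete_law_holds\<close>: expand \<open>eta_on S\<close> by the vertex
  recurrence at a vertex \<open>z \<in> Z\<close>.\<close>

context
  fixes S Z z n
  assumes IH: "\<And>Z' S' n'. card Z' < card Z \<Longrightarrow> finite Z' \<Longrightarrow> Z' \<subseteq> S' \<Longrightarrow> S' \<subseteq> V \<Longrightarrow>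
      n' + card Z' = mult_on (S' - Z') \<Longrightarrow> tcoeff_delete_law S' Z' n'"
    and fin: "finite Z" and z: "z \<in> Z" and ZS: "Z \<subseteq> S" and SV: "S \<subseteq> V"
    and n: "n + card Z = mult_on (S - Z)"
begin

lemma card_delete_pivot: "card Z = Suc (card (Z - {z}))"
  using fin z by (metis card_Suc_Diff1)

lemma vanishes_to_delete_pivot: "vanishes_to th (eta_on (S - {z})) (Suc n)"
proof -
  have "S - {z} - (Z - {z}) = S - Z"
    using z by auto
  then have "Suc n + card (Z - {z}) = mult_on (S - {z} - (Z - {z}))"
    using n card_delete_pivot by simp
  then show ?thesis
    using IH[of "Z - {z}" "S - {z}" "Suc n"] card_delete_pivot fin ZS SV
    by (auto simp: tcoeff_delete_law_def)
qed

lemma tcoeff_neighbour_term: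
  assumes t: "t \<in> nbrs S z"
  shows "vanishes_to th (eta_on (S - {z} - {t})) n"
    and "\<not> matching_partner S Z z t \<Longrightarrow> tcoeff th (eta_on (S - {z} - {t})) n = 0"
    and "matching_partner S Z z t \<Longrightarrow>
           (-1) ^ card (Z - {z}) * tcoeff th (eta_on (S - {z} - {t})) n * lowest_tcoeff (S - Z) > 0"
proof -
  define Z' where "Z' = Z - {z}"
  define T where "T = S - {z} - {t}"
  have TV: "T \<subseteq> V"
    using SV T_def by auto
  have fZ': "finite Z'"
    using fin Z'_def by simp
  have tS: "t \<in> S - {z}"
    using t by (auto simp: nbrs_def)
  have "vanishes_to th (eta_on T) n \<and>
      (\<not> matching_partner S Z z t \<longrightarrow> tcoeff th (eta_on T) n = 0) \<and>
      (matching_partner S Z z t \<longrightarrow> (-1) ^ card Z' * tcoeff th (eta_on T) n * lowest_tcoeff (S - Z) > 0)"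
  proof (cases "t \<in> Z")
    case True
    define Z'' where "Z'' = Z' - {t}"
    have "t \<in> Z'"
      using True tS Z'_def by auto
    then have c1: "card Z' = Suc (card Z'')"
      using fZ' Z''_def by (metis card_Suc_Diff1)
    have "T - Z'' = S - Z"
      using True z Z'_def Z''_def T_def ZS by auto
    then have "Suc (Suc n) + card Z'' = mult_on (T - Z'')"
      using n card_delete_pivot c1 Z'_def by simp
    moreover have "card Z'' < card Z" "finite Z''" "Z'' \<subseteq> T"
      using card_delete_pivot c1 fZ' ZS Z'_def Z''_def T_def by auto
    ultimately have "vanishes_to th (eta_on T) (Suc (Suc n))"
      using IH[of Z'' T "Suc (Suc n)"] TV by (simp add: tcoeff_delete_law_def)
    then have "vanishes_to th (eta_on T) n" "tcoeff th (eta_on T) n = 0"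
      by (auto simp: vanishes_to_def)
    moreover have "\<not> matching_partner S Z z t"
      using True by (simp add: matching_partner_def)
    ultimately show ?thesis
      by simp
  next
    case False
    have tSZ: "t \<in> S - Z"
      using tS False by auto
    define r where "r = mult_on (S - Z - {t})"
    have le: "mult_on (S - Z) \<le> r + 1"
      using mult_on_le_delete[OF _ tSZ] SV r_def by auto
    have set3: "T - Z' = S - Z - {t}"
      using z Z'_def T_def by auto
    have "card Z' < card Z" "Z' \<subseteq> T"
      using card_delete_pivot ZS False Z'_def T_def by auto
    then have IHt: "tcoeff_delete_law T Z' n'" if "n' + card Z' = r" for n'
      using IH[of Z' T n'] that fZ' TV set3 r_def by simp
    show ?thesis
    proof (cases "r + 1 = mult_on (S - Z)")
      case True
      then have law: "tcoeff_delete_law T Z' n"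
        using IHt n card_delete_pivot Z'_def by simp
      have partner: "matching_partner S Z z t \<longleftrightarrow> raising_matching T Z'"
        using True False r_def by (simp add: matching_partner_def Z'_def T_def)
      have lc: "lowest_tcoeff (S - Z) * lowest_tcoeff (T - Z') > 0"
        using essential_tcoeff_sign[OF _ tSZ] True SV r_def set3 by (auto simp: lowest_tcoeff_def)
      have "(-1) ^ card Z' * tcoeff th (eta_on T) n * lowest_tcoeff (S - Z) > 0"
        if "raising_matching T Z'"
      proof (rule pos_mult_sign_transfer[OF lc])
        show "(-1) ^ card Z' * tcoeff th (eta_on T) n * lowest_tcoeff (T - Z') > 0"
          using law that by (simp add: tcoeff_delete_law_def)
      qed
      then show ?thesis
        using law partner by (auto simp: tcoeff_delete_law_def)
    next
      case False
      then have "(r - card Z') + card Z' = r" "Suc n \<le> r - card Z'"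
        using le n card_delete_pivot Z'_def by auto
      then have "vanishes_to th (eta_on T) (Suc n)"
        using IHt[of "r - card Z'"] vanishes_to_mono[of th "eta_on T" "r - card Z'" "Suc n"]
        by (simp add: tcoeff_delete_law_def)
      then have "vanishes_to th (eta_on T) n" "tcoeff th (eta_on T) n = 0"
        by (auto simp: vanishes_to_def)
      moreover have "\<not> matching_partner S Z z t"
        using False r_def by (simp add: matching_partner_def)
      ultimately show ?thesis
        by simp
    qed
  qed
  then show "vanishes_to th (eta_on (S - {z} - {t})) n"
    and "\<not> matching_partner S Z z t \<Longrightarrow> tcoeff th (eta_on (S - {z} - {t})) n = 0"
    and "matching_partner S Z z t \<Longrightarrow>
           (-1) ^ card (Z - {z}) * tcoeff th (eta_on (S - {z} - {t})) n * lowest_tcoeff (S - Z) > 0"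
    using Z'_def T_def by auto
qed

lemma tcoeff_delete_law_step: "tcoeff_delete_law S Z n"
proof -
  define N where "N = nbrs S z"
  define partners where "partners = {t \<in> N. matching_partner S Z z t}"
  have fN: "finite N"
    using finite_nbrs SV N_def by blast
  have zS: "z \<in> S"
    using z ZS by auto
  have eq: "eta_on S = vertex_factor z * eta_on (S - {z})
      - (\<Sum>t\<in>N. smult (wsq z t) (eta_on (S - {z} - {t})))"
    using eta_on_remove_vertex[OF SV zS] N_def by simp
  have first: "vanishes_to th (vertex_factor z * eta_on (S - {z})) (Suc n)"
    using vanishes_to_mult[OF vanishes_to_0 vanishes_to_delete_pivot] by simp
  have vanishes: "vanishes_to th (eta_on S) n"
    unfolding eq using first tcoeff_neighbour_term(1) N_def
    by (intro vanishes_to_diff vanishes_to_sum vanishes_to_smult) (auto intro: vanishes_to_mono)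
  have "tcoeff th (eta_on S) n = - (\<Sum>t\<in>N. wsq z t * tcoeff th (eta_on (S - {z} - {t})) n)"
    unfolding eq using first by (simp add: vanishes_to_def)
  also have "(\<Sum>t\<in>N. wsq z t * tcoeff th (eta_on (S - {z} - {t})) n)
      = (\<Sum>t\<in>partners. wsq z t * tcoeff th (eta_on (S - {z} - {t})) n)"
    using fN tcoeff_neighbour_term(2) N_def by (intro sum.mono_neutral_right) (auto simp: partners_def)
  finally have tc_eq: "tcoeff th (eta_on S) n
      = - (\<Sum>t\<in>partners. wsq z t * tcoeff th (eta_on (S - {z} - {t})) n)" .
  have partners_iff: "raising_matching S Z \<longleftrightarrow> partners \<noteq> {}"
    using matching_partner_of_raising_matching[OF _ fin z SV]
      raising_matching_of_matching_partner[OF _ _ fin z]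
    by (auto simp: partners_def N_def)
  have sign: "(-1) ^ card Z * tcoeff th (eta_on S) n * lowest_tcoeff (S - Z) > 0"
    if "raising_matching S Z"
  proof -
    have "(-1) ^ card Z * tcoeff th (eta_on S) n * lowest_tcoeff (S - Z)
        = (\<Sum>t\<in>partners. wsq z t *
             ((-1) ^ card (Z - {z}) * tcoeff th (eta_on (S - {z} - {t})) n * lowest_tcoeff (S - Z)))"
      unfolding tc_eq card_delete_pivot by (simp add: sum_distrib_left sum_distrib_right algebra_simps sum_negf)
    also have "\<dots> > 0"
    proof (rule sum_pos)
      show "finite partners"
        using fN by (simp add: partners_def)
      show "partners \<noteq> {}"
        using that partners_iff by blast
      fix t assume "t \<in> partners"
      then show "wsq z t * ((-1) ^ card (Z - {z}) * tcoeff th (eta_on (S - {z} - {t})) n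
          * lowest_tcoeff (S - Z)) > 0"
        using tcoeff_neighbour_term(3) wsq_pos by (auto simp: partners_def N_def nbrs_def)
    qed
    finally show ?thesis .
  qed
  moreover have "tcoeff th (eta_on S) n = 0" if "\<not> raising_matching S Z"
    using that partners_iff tc_eq by simp
  ultimately show ?thesis
    unfolding tcoeff_delete_law_def using vanishes by fastforce
qed

end

lemma tcoeff_delete_law_holds:
  "finite Z \<Longrightarrow> Z \<subseteq> S \<Longrightarrow> S \<subseteq> V \<Longrightarrow> n + card Z = mult_on (S - Z) \<Longrightarrow> tcoeff_delete_law S Z n"
proof (induct "card Z" arbitrary: Z S n rule: less_induct)
  case less
  show ?case
  proof (cases "Z = {}")
    case True
    then show ?thesis
      using tcoeff_delete_law_empty[OF less(4)] less(5) by simp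
  next
    case False
    then obtain z where "z \<in> Z"
      by blast
    then show ?thesis
      using tcoeff_delete_law_step[of Z] less by blast
  qed
qed

lemma mult_on_delete_set_iff:
  assumes "finite Z" "Z \<subseteq> S" "S \<subseteq> V"
  shows "mult_on (S - Z) = mult_on S + card Z \<longleftrightarrow> raising_matching S Z"
proof
  assume "mult_on (S - Z) = mult_on S + card Z"
  then have "tcoeff_delete_law S Z (mult_on S)"
    using tcoeff_delete_law_holds[OF assms] by simp
  then show "raising_matching S Z"
    using vanishes_to_mult_on[OF assms(3)] by (simp add: tcoeff_delete_law_def)
next
  assume ex: "raising_matching S Z"
  then have "card Z \<le> mult_on (S - Z)"
    by (auto simp: raising_matching_def)
  then have h: "(mult_on (S - Z) - card Z) + card Z = mult_on (S - Z)"
    by simp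
  then have "tcoeff_delete_law S Z (mult_on (S - Z) - card Z)"
    using tcoeff_delete_law_holds[OF assms] by blast
  then have "mult_on S = mult_on (S - Z) - card Z"
    using ex order_eqI_tcoeff by (auto simp: tcoeff_delete_law_def mult_on_def)
  then show "mult_on (S - Z) = mult_on S + card Z"
    using h by simp
qed


lemma raising_matching_delete_in_part:
  assumes SV: "S \<subseteq> V" and ZS: "Z \<subseteq> S" and KT: "K \<subseteq> S - Z" and sep: "separated (S - Z) K"
    and x: "x \<in> K" and mKx: "mult_on (K - {x}) = 0"
  shows "raising_matching (S - {x}) Z \<longleftrightarrow> raising_matching (S - K) Z"
proof -
  define R where "R = S - K - Z"
  have fZ: "finite Z"
    using ZS SV finite_subset_verts finite_subset by blast
  have RV: "R \<subseteq> V"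
    using SV R_def by auto
  have split: "mult_on (S - {x} - Z - F) = mult_on (K - ({x} \<union> F)) + mult_on (R - F)" for F
  proof -
    have "mult_on (S - Z - ({x} \<union> F))
        = mult_on (K - ({x} \<union> F)) + mult_on (S - Z - ({x} \<union> F) - (K - ({x} \<union> F)))"
      using mult_on_separated[OF _ _ separated_diff[OF sep, of "{x} \<union> F"]] KT SV by auto
    moreover have "S - Z - ({x} \<union> F) - (K - ({x} \<union> F)) = R - F"
      using R_def x by auto
    moreover have "S - Z - ({x} \<union> F) = S - {x} - Z - F"
      by auto
    ultimately show ?thesis
      by simp
  qed
  have mTx: "mult_on (S - {x} - Z) = mult_on R"
    using split[of "{}"] mKx by simp
  have SK: "S - K - Z = R" "S - {x} - Z = S - Z - {x}"
    using R_def by auto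
  show ?thesis
  proof
    assume "raising_matching (S - {x}) Z"
    then obtain f where f: "inj_on f Z" "\<forall>z\<in>Z. f z \<in> S - {x} - Z \<and> {z, f z} \<in> E"
      "mult_on (S - {x} - Z - f ` Z) + card Z = mult_on (S - {x} - Z)"
      by (auto simp: raising_matching_def)
    define F where "F = f ` Z"
    have fF: "finite F"
      using fZ F_def by simp
    have cF: "card F = card Z"
      using card_image[OF f(1)] F_def by simp
    have e2: "mult_on R \<le> mult_on (R - F) + card (F \<inter> R)"
      using mult_on_delete_set[OF RV fF] by simp
    have e3: "card (F \<inter> R) \<le> card F"
      by (rule card_mono[OF fF]) auto
    have e4: "mult_on (R - F) + mult_on (K - ({x} \<union> F)) + card Z = mult_on R"
      using f(3) split[of F] mTx F_def by simp
    have "card (F \<inter> R) = card F"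
      using e2 e3 e4 cF by linarith
    then have "F \<subseteq> R"
      using card_subset_eq[OF fF, of "F \<inter> R"] by auto
    moreover have "mult_on (R - F) + card Z = mult_on R"
      using e2 e3 e4 cF by linarith
    ultimately show "raising_matching (S - K) Z"
      unfolding raising_matching_def SK using f(1,2) F_def by blast
  next
    assume "raising_matching (S - K) Z"
    then obtain f where f: "inj_on f Z" "\<forall>z\<in>Z. f z \<in> R \<and> {z, f z} \<in> E"
        "mult_on (R - f ` Z) + card Z = mult_on R"
      by (auto simp: raising_matching_def SK)
    have "K - ({x} \<union> f ` Z) = K - {x}"
      using f(2) R_def by auto
    then have "mult_on (S - {x} - Z - f ` Z) = mult_on (R - f ` Z)"
      using split[of "f ` Z"] mKx by simp
    moreover have "\<forall>z\<in>Z. f z \<in> S - {x} - Z \<and> {z, f z} \<in> E"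
      using f(2) R_def x by auto
    ultimately show "raising_matching (S - {x}) Z"
      unfolding raising_matching_def using f(1,3) mTx by (intro exI[of _ f]) auto
  qed
qed

text \<open>Inside a critical part \<open>K\<close> of \<open>S - Z\<close>, essentiality in \<open>S\<close> no longer depends on the
  vertex.\<close>

lemma essential_iff_raising_matching_outside:
  assumes SV: "S \<subseteq> V" and ZS: "Z \<subseteq> S" and raise: "mult_on (S - Z) = mult_on S + card Z"
    and KT: "K \<subseteq> S - Z" and sep: "separated (S - Z) K" and mK: "mult_on K = 1"
    and x: "x \<in> K" and mKx: "mult_on (K - {x}) = 0"
  shows "mult_on (S - {x}) + 1 = mult_on S \<longleftrightarrow> raising_matching (S - K) Z"
proof -
  have fZ: "finite Z"
    using ZS SV finite_subset_verts finite_subset by blast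
  have m1: "mult_on (S - Z) = 1 + mult_on (S - Z - K)"
    using mult_on_separated[OF KT _ sep] SV mK by auto
  have "mult_on (S - Z - {x}) = mult_on (K - {x}) + mult_on (S - Z - {x} - (K - {x}))"
    using mult_on_separated[OF _ _ separated_diff[OF sep, of "{x}"]] KT SV by auto
  moreover have "S - Z - {x} - (K - {x}) = S - Z - K" "S - {x} - Z = S - Z - {x}"
    using x by auto
  ultimately have m2: "mult_on (S - {x} - Z) = mult_on (S - Z - K)"
    using mKx by simp
  have "mult_on (S - {x}) + 1 = mult_on S \<longleftrightarrow>
      mult_on (S - {x} - Z) = mult_on (S - {x}) + card Z"
    using m1 m2 raise by arith
  also have "\<dots> \<longleftrightarrow> raising_matching (S - {x}) Z"
    using x KT ZS SV by (intro mult_on_delete_set_iff[OF fZ]) auto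
  also have "\<dots> \<longleftrightarrow> raising_matching (S - K) Z"
    by (rule raising_matching_delete_in_part[OF SV ZS KT sep x mKx])
  finally show ?thesis .
qed


section \<open>The Gallai--Edmonds decomposition\<close>

definition adj_on :: "'a set \<Rightarrow> 'a \<Rightarrow> 'a \<Rightarrow> bool" where
  "adj_on T x y \<longleftrightarrow> x \<in> T \<and> y \<in> T \<and> {x, y} \<in> E"

definition comp_of :: "'a set \<Rightarrow> 'a \<Rightarrow> 'a set" where
  "comp_of T x = {y \<in> T. (adj_on T)\<^sup>*\<^sup>* x y}"

definition connected_on :: "'a set \<Rightarrow> bool" where
  "connected_on K \<longleftrightarrow> (\<forall>B. B \<subseteq> K \<longrightarrow> B \<noteq> {} \<longrightarrow> separated K B \<longrightarrow> B = K)"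

lemma adj_on_reach_sym: "(adj_on T)\<^sup>*\<^sup>* x y \<Longrightarrow> (adj_on T)\<^sup>*\<^sup>* y x"
proof (induct rule: rtranclp_induct)
  case (step y z)
  then have "adj_on T z y"
    by (auto simp: adj_on_def insert_commute)
  then show ?case
    using step(3) by (rule converse_rtranclp_into_rtranclp)
qed simp

lemma comp_of_subset: "comp_of T x \<subseteq> T"
  by (auto simp: comp_of_def)

lemma comp_of_self: "x \<in> T \<Longrightarrow> x \<in> comp_of T x"
  by (auto simp: comp_of_def)

lemma comp_of_adj: "y \<in> comp_of T x \<Longrightarrow> z \<in> T \<Longrightarrow> {y, z} \<in> E \<Longrightarrow> z \<in> comp_of T x"
  unfolding comp_of_def by (auto simp: adj_on_def intro: rtranclp.rtrancl_into_rtrancl)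

lemma separated_comp_of: "separated T (comp_of T x)"
  unfolding separated_def using comp_of_adj by blast

lemma connected_on_comp_of: "connected_on (comp_of T x)"
  unfolding connected_on_def
proof (intro allI impI)
  fix B assume B: "B \<subseteq> comp_of T x" "B \<noteq> {}" "separated (comp_of T x) B"
  obtain z where z: "z \<in> B"
    using B(2) by blast
  have xz: "(adj_on T)\<^sup>*\<^sup>* x z"
    using z B(1) by (auto simp: comp_of_def)
  have "y \<in> B" if "(adj_on T)\<^sup>*\<^sup>* z y" for y
    using that
  proof (induct rule: rtranclp_induct)
    case (step a b)
    have "(adj_on T)\<^sup>*\<^sup>* x b"
      using rtranclp_trans[OF xz step(1)] step(2) by (rule rtranclp.rtrancl_into_rtrancl)
    then have "b \<in> comp_of T x"
      using step(2) by (auto simp: comp_of_def adj_on_def)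
    moreover have "{a, b} \<in> E"
      using step(2) by (simp add: adj_on_def)
    ultimately show ?case
      using B(3) step(3) unfolding separated_def by blast
  qed (rule z)
  moreover have "(adj_on T)\<^sup>*\<^sup>* z y" if "y \<in> comp_of T x" for y
    using that adj_on_reach_sym[OF xz] by (auto simp: comp_of_def intro: rtranclp_trans)
  ultimately show "B = comp_of T x"
    using B(1) by blast
qed

definition essential_on :: "'a set \<Rightarrow> 'a \<Rightarrow> bool" where
  "essential_on S v \<longleftrightarrow> v \<in> S \<and> mult_on (S - {v}) + 1 = mult_on S"

definition neutral_on :: "'a set \<Rightarrow> 'a \<Rightarrow> bool" where
  "neutral_on S v \<longleftrightarrow> v \<in> S \<and> mult_on (S - {v}) = mult_on S"

definition positive_on :: "'a set \<Rightarrow> 'a \<Rightarrow> bool" where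
  "positive_on S v \<longleftrightarrow> v \<in> S \<and> mult_on (S - {v}) = mult_on S + 1"

definition special_on :: "'a set \<Rightarrow> 'a \<Rightarrow> bool" where
  "special_on S v \<longleftrightarrow> v \<in> S \<and> \<not> essential_on S v \<and> (\<exists>u. essential_on S u \<and> {u, v} \<in> E)"

definition D_on :: "'a set \<Rightarrow> 'a set" where
  "D_on S = {v. essential_on S v}"

definition A_on :: "'a set \<Rightarrow> 'a set" where
  "A_on S = {v. special_on S v}"

definition N_on :: "'a set \<Rightarrow> 'a set" where
  "N_on S = {v. neutral_on S v}"

definition P_on :: "'a set \<Rightarrow> 'a set" where
  "P_on S = {v. positive_on S v \<and> \<not> special_on S v}"

definition critical_on :: "'a set \<Rightarrow> bool" where
  "critical_on K \<longleftrightarrow> (\<forall>v\<in>K. essential_on K v) \<and> mult_on K = 1"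

lemma D_on_subset: "D_on S \<subseteq> S"
  by (auto simp: D_on_def essential_on_def)

lemma A_on_subset: "A_on S \<subseteq> S"
  by (auto simp: A_on_def special_on_def)

lemma vertex_trichotomy:
  "S \<subseteq> V \<Longrightarrow> v \<in> S \<Longrightarrow> essential_on S v \<or> neutral_on S v \<or> positive_on S v"
  using mult_on_le_delete[of S v] mult_on_delete_le[of S v]
  unfolding essential_on_def neutral_on_def positive_on_def by linarith

lemma essential_on_separated:
  assumes "K \<subseteq> T" "T \<subseteq> V" "separated T K" "v \<in> K"
  shows "essential_on T v \<longleftrightarrow> essential_on K v"
proof -
  have "mult_on (T - {v}) = mult_on (K - {v}) + mult_on (T - {v} - (K - {v}))"
    using mult_on_separated[OF _ _ separated_diff[OF assms(3), of "{v}"]] assms(1,2) by auto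
  moreover have "T - {v} - (K - {v}) = T - K"
    using assms(4) by auto
  ultimately show ?thesis
    using mult_on_separated[OF assms(1-3)] assms(1,4) unfolding essential_on_def by auto
qed

definition gallai_edmonds :: "'a set \<Rightarrow> bool" where
  "gallai_edmonds S \<longleftrightarrow> mult_on (S - A_on S) = mult_on S + card (A_on S) \<and>
     D_on (S - A_on S) = D_on S \<and> N_on (S - A_on S) = N_on S \<and> P_on (S - A_on S) = P_on S \<and>
     A_on (S - A_on S) = {} \<and> separated (S - A_on S) (D_on S) \<and> mult_on (S - A_on S - D_on S) = 0 \<and>
     (\<forall>K. K \<subseteq> D_on S \<longrightarrow> K \<noteq> {} \<longrightarrow> separated (D_on S) K \<longrightarrow> connected_on K \<longrightarrow> critical_on K)"

lemma separated_after_delete_essential: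
  assumes CV: "C \<subseteq> V" and ess: "\<forall>v\<in>C. essential_on C v" and v: "v \<in> C"
    and GE: "gallai_edmonds (C - {v})"
  shows "separated (C - A_on (C - {v})) (D_on (C - {v}))"
  unfolding separated_def
proof (intro ballI)
  define L where "L = C - {v}"
  fix x y assume x: "x \<in> D_on (C - {v})" and y: "y \<in> C - A_on (C - {v}) - D_on (C - {v})"
  show "{x, y} \<notin> E"
  proof (cases "y = v")
    case True
    have xC: "x \<in> C" "x \<noteq> v" "mult_on (C - {v} - {x}) + 1 = mult_on (C - {v})"
      using x by (auto simp: D_on_def essential_on_def)
    have "mult_on (C - {v}) + 1 = mult_on C" "mult_on (C - {x}) + 1 = mult_on C"
      using ess v xC(1) by (auto simp: essential_on_def)
    then show ?thesis
      using essential_adjacent_essential[OF CV v xC(1) xC(2)[symmetric]] xC(3) True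
      by (auto simp: insert_commute)
  next
    case False
    then have "y \<in> L - A_on L - D_on L"
      using y L_def by auto
    then show ?thesis
      using GE x L_def unfolding gallai_edmonds_def separated_def by blast
  qed
qed

lemma critical_of_essential_connected:
  assumes CV: "C \<subseteq> V" and "C \<noteq> {}" and conn: "connected_on C"
    and ess: "\<forall>v\<in>C. essential_on C v" and IH: "\<And>v. v \<in> C \<Longrightarrow> gallai_edmonds (C - {v})"
  shows "mult_on C = 1"
proof (rule ccontr)
  assume "mult_on C \<noteq> 1"
  obtain v where v: "v \<in> C"
    using \<open>C \<noteq> {}\<close> by blast
  define L where "L = C - {v}"
  define A where "A = A_on L"
  define B where "B = D_on L"
  have LV: "L \<subseteq> V"
    using CV L_def by auto
  have mL: "mult_on L + 1 = mult_on C"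
    using ess v L_def by (auto simp: essential_on_def)
  have GE: "mult_on (L - A) = mult_on L + card A" "D_on (L - A) = B" "separated (L - A) B"
      "mult_on (L - A - B) = 0"
    using IH[OF v] unfolding L_def A_def B_def gallai_edmonds_def by auto
  have sepB: "separated (C - A) B"
    using separated_after_delete_essential[OF CV ess v IH[OF v]] L_def A_def B_def by simp
  have BLA: "B \<subseteq> L - A"
    using GE(2) D_on_subset by metis
  have fA: "finite A"
    using finite_subset_verts[OF LV] A_on_subset finite_subset A_def by metis
  show False
  proof (cases "A = {}")
    case True
    have "mult_on L \<ge> 1"
      using mL \<open>mult_on C \<noteq> 1\<close> by simp
    then have "B \<noteq> {}"
      using exists_essential[OF LV] by (auto simp: B_def D_on_def essential_on_def)
    then have "B = C"
      using conn sepB BLA True L_def unfolding connected_on_def by auto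
    then show False
      using BLA v L_def by auto
  next
    case False
    then obtain x where x: "x \<in> A"
      by blast
    have xC: "x \<in> C"
      using x A_on_subset L_def A_def by blast
    have "mult_on (C - A) = mult_on B + mult_on (C - A - B)"
      using mult_on_separated[OF _ _ sepB] BLA CV L_def by auto
    moreover have "mult_on (L - A) = mult_on B + mult_on (L - A - B)"
      using mult_on_separated[OF BLA _ GE(3)] LV by auto
    ultimately have "mult_on (C - A) \<ge> mult_on L + card A"
      using GE(1,4) by simp
    moreover have "mult_on (C - A) \<le> mult_on (C - {x}) + card ((A - {x}) \<inter> (C - {x}))"
    proof -
      have "C - {x} - (A - {x}) = C - A"
        using x by auto
      then show ?thesis
        using mult_on_delete_set[of "C - {x}" "A - {x}"] CV fA by auto
    qed
    moreover have "card ((A - {x}) \<inter> (C - {x})) \<le> card A - 1"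
      using card_mono[OF _ Int_lower1, of "A - {x}" "C - {x}"] fA x by (simp add: card_Diff_singleton)
    moreover have "card A \<ge> 1" "mult_on (C - {x}) + 1 = mult_on C"
      using x fA ess xC by (auto simp: essential_on_def Suc_le_eq card_gt_0_iff)
    ultimately show False
      using mL by linarith
  qed
qed


lemma essential_on_delete_nonessential:
  assumes SV: "S \<subseteq> V" and a: "a \<in> S" "\<not> essential_on S a" and v: "essential_on S v"
  shows "essential_on (S - {a}) v"
proof -
  have "v \<in> S" "v \<noteq> a" "mult_on (S - {v}) + 1 = mult_on S" "mult_on (S - {a}) + 1 \<noteq> mult_on S"
    using a v by (auto simp: essential_on_def)
  then show ?thesis
    using essential_delete_nonessential[OF SV a(1)] by (auto simp: essential_on_def)
qed

text \<open>The heart of the stability lemma: an essential vertex \<open>u\<close> and its special neighbour \<open>a\<close>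
  end up in one critical part of \<open>S - v - A(S - v)\<close> for positive \<open>v\<close>, so by
  \<open>essential_iff_raising_matching_outside\<close> they are essential in \<open>S\<close> together.\<close>

lemma essential_via_critical_part:
  assumes SV: "S \<subseteq> V" and u: "essential_on S u" and ua: "{u, a} \<in> E"
    and v: "v \<in> S" "mult_on (S - {v}) = mult_on S + 1" and GE: "gallai_edmonds (S - {v})"
    and uL: "essential_on (S - {v}) u" and aL: "essential_on (S - {v}) a"
  shows "essential_on S a"
proof -
  define L where "L = S - {v}"
  define A where "A = A_on L"
  define B where "B = D_on L"
  have LV: "L \<subseteq> V"
    using SV L_def by auto
  have GE': "mult_on (L - A) = mult_on L + card A" "D_on (L - A) = B" "separated (L - A) B"
      "\<And>K. K \<subseteq> B \<Longrightarrow> K \<noteq> {} \<Longrightarrow> separated B K \<Longrightarrow> connected_on K \<Longrightarrow> critical_on K"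
    using GE unfolding gallai_edmonds_def L_def A_def B_def by auto
  have uB: "u \<in> B" and aB: "a \<in> B"
    using uL aL by (auto simp: B_def D_on_def L_def)
  have fA: "finite A"
    using finite_subset_verts[OF LV] A_on_subset finite_subset A_def by metis
  have vA: "v \<notin> A"
    using A_on_subset A_def L_def by blast
  define Z where "Z = insert v A"
  have ZS: "Z \<subseteq> S"
    using A_on_subset A_def L_def v(1) Z_def by auto
  have SZ: "S - Z = L - A"
    using Z_def L_def by auto
  have raise: "mult_on (S - Z) = mult_on S + card Z"
    using SZ GE'(1) v(2) fA vA Z_def L_def by simp
  have BLA: "B \<subseteq> L - A"
    using GE'(2) D_on_subset by metis
  define K where "K = comp_of B u"
  have uK: "u \<in> K" and aK: "a \<in> K"
    using comp_of_self[OF uB] comp_of_adj[OF comp_of_self[OF uB] aB ua] K_def by simp_all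
  have KB: "K \<subseteq> B"
    using comp_of_subset K_def by simp
  have sepK: "separated (S - Z) K"
    using separated_trans[OF GE'(3) separated_comp_of comp_of_subset] SZ K_def by simp
  have "critical_on K"
    using GE'(4)[OF KB] uK separated_comp_of connected_on_comp_of K_def by blast
  then have mK: "mult_on K = 1" "mult_on (K - {u}) = 0" "mult_on (K - {a}) = 0"
    using uK aK by (auto simp: critical_on_def essential_on_def)
  have KT: "K \<subseteq> S - Z"
    using KB BLA SZ by auto
  show ?thesis
    using essential_iff_raising_matching_outside[OF SV ZS raise KT sepK mK(1) aK mK(3)]
      essential_iff_raising_matching_outside[OF SV ZS raise KT sepK mK(1) uK mK(2)] u aK KT
    by (auto simp: essential_on_def)
qed

lemma D_on_delete_special:
  assumes SV: "S \<subseteq> V" and a: "special_on S a" and IH: "\<And>v. v \<in> S \<Longrightarrow> gallai_edmonds (S - {v})"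
  shows "D_on (S - {a}) = D_on S"
proof
  obtain u where u: "essential_on S u" "{u, a} \<in> E" and aS: "a \<in> S" and na: "\<not> essential_on S a"
    using a by (auto simp: special_on_def)
  show "D_on S \<subseteq> D_on (S - {a})"
    using essential_on_delete_nonessential[OF SV aS na] by (auto simp: D_on_def)
  have uS: "u \<in> S" "u \<noteq> a" and eu: "mult_on (S - {u}) + 1 = mult_on S"
    using u na by (auto simp: essential_on_def)
  have pos: "mult_on (S - {a}) = mult_on S + 1"
    using adjacent_essential_positive[OF SV uS(1) aS uS(2) u(2) eu] na aS by (auto simp: essential_on_def)
  show "D_on (S - {a}) \<subseteq> D_on S"
  proof
    fix v assume "v \<in> D_on (S - {a})"
    then have v: "v \<in> S" "v \<noteq> a" "mult_on (S - {a} - {v}) = mult_on S"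
      using pos by (auto simp: D_on_def essential_on_def)
    show "v \<in> D_on S"
    proof (rule ccontr)
      assume nv: "v \<notin> D_on S"
      then have uv: "u \<noteq> v" and nv': "\<not> essential_on S v"
        using u v(1) by (auto simp: D_on_def)
      have uL: "essential_on (S - {v}) u"
        using essential_on_delete_nonessential[OF SV v(1) nv' u(1)] .
      have aL: "mult_on (S - {v} - {a}) = mult_on S"
        using v(3) by (simp add: Diff_commute_singletons)
      consider "mult_on (S - {v}) = mult_on S" | "mult_on (S - {v}) = mult_on S + 1"
        using vertex_trichotomy[OF SV v(1)] nv'
        by (auto simp: essential_on_def neutral_on_def positive_on_def)
      then show False
      proof cases
        case 1
        have SvV: "S - {v} \<subseteq> V" and "u \<in> S - {v}" "a \<in> S - {v}"
          using SV uS aS v uv by auto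
        moreover have "mult_on (S - {v} - {u}) + 1 = mult_on (S - {v})"
          using uL by (simp add: essential_on_def)
        ultimately show False
          using not_adjacent_essential_neutral[OF SvV _ _ uS(2) u(2)] aL 1 by simp
      next
        case 2
        then have "essential_on (S - {v}) a"
          using aL aS v(2) by (simp add: essential_on_def)
        then have "essential_on S a"
          using essential_via_critical_part[OF SV u(1,2) v(1) 2 IH[OF v(1)] uL] by blast
        then show False
          using na by simp
      qed
    qed
  qed
qed

lemma neutral_positive_delete_positive:
  assumes SV: "S \<subseteq> V" and a: "a \<in> S" "mult_on (S - {a}) = mult_on S + 1"
    and ess: "\<And>x. essential_on (S - {a}) x \<longleftrightarrow> essential_on S x" and va: "v \<noteq> a"
  shows "neutral_on (S - {a}) v \<longleftrightarrow> neutral_on S v"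
    and "positive_on (S - {a}) v \<longleftrightarrow> positive_on S v"
proof -
  have "(neutral_on (S - {a}) v \<longleftrightarrow> neutral_on S v) \<and> (positive_on (S - {a}) v \<longleftrightarrow> positive_on S v)"
  proof (cases "v \<in> S")
    case False
    then show ?thesis
      by (auto simp: neutral_on_def positive_on_def)
  next
    case True
    note bounds = mult_on_delete_pair[OF SV a(1) True va[symmetric]]
    have not_ess: "mult_on (S - {a} - {v}) + 1 \<noteq> mult_on (S - {a})" if "\<not> essential_on S v"
    proof -
      have "\<not> essential_on (S - {a}) v"
        using that ess by simp
      then show ?thesis
        using True va by (simp add: essential_on_def)
    qed
    consider "essential_on S v" | "neutral_on S v" | "positive_on S v"
      using vertex_trichotomy[OF SV True] by blast
    then show ?thesis
    proof cases
      case 1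
      then have "essential_on (S - {a}) v"
        using ess by blast
      then have "mult_on (S - {a} - {v}) + 1 = mult_on (S - {a})"
        by (simp add: essential_on_def)
      then show ?thesis
        using 1 by (auto simp: neutral_on_def positive_on_def essential_on_def)
    next
      case 2
      then have "\<not> essential_on S v" "mult_on (S - {v}) = mult_on S"
        by (auto simp: neutral_on_def essential_on_def)
      then have "mult_on (S - {a} - {v}) = mult_on (S - {a})"
        using not_ess bounds a(2) by linarith
      then show ?thesis
        using 2 a(2) True va by (auto simp: neutral_on_def positive_on_def)
    next
      case 3
      then have "\<not> essential_on S v" "mult_on (S - {v}) = mult_on S + 1"
        by (auto simp: positive_on_def essential_on_def)
      moreover have "mult_on (S - {a} - {v}) \<noteq> mult_on S + 1"
        using positive_pair_delete[OF SV a(1) True va[symmetric] a(2)] calculation(2) by simp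
      ultimately have "mult_on (S - {a} - {v}) = mult_on (S - {a}) + 1"
        using not_ess bounds a(2) by linarith
      then show ?thesis
        using 3 a(2) True va by (auto simp: neutral_on_def positive_on_def)
    qed
  qed
  then show "neutral_on (S - {a}) v \<longleftrightarrow> neutral_on S v" "positive_on (S - {a}) v \<longleftrightarrow> positive_on S v"
    by auto
qed

lemma delete_special:
  assumes SV: "S \<subseteq> V" and a: "special_on S a" and IH: "\<And>v. v \<in> S \<Longrightarrow> gallai_edmonds (S - {v})"
  shows "mult_on (S - {a}) = mult_on S + 1 \<and> D_on (S - {a}) = D_on S \<and> N_on (S - {a}) = N_on S \<and>
         P_on (S - {a}) = P_on S \<and> A_on (S - {a}) = A_on S - {a}"
proof -
  obtain u where u: "essential_on S u" "{u, a} \<in> E" and aS: "a \<in> S" and na: "\<not> essential_on S a"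
    using a by (auto simp: special_on_def)
  have uS: "u \<in> S" "u \<noteq> a" and eu: "mult_on (S - {u}) + 1 = mult_on S"
    using u na by (auto simp: essential_on_def)
  have pos: "mult_on (S - {a}) = mult_on S + 1"
    using adjacent_essential_positive[OF SV uS(1) aS uS(2) u(2) eu] na aS by (auto simp: essential_on_def)
  have DD: "D_on (S - {a}) = D_on S"
    by (rule D_on_delete_special[OF SV a IH])
  then have ess: "essential_on (S - {a}) x \<longleftrightarrow> essential_on S x" for x
    by (auto simp: D_on_def)
  note types = neutral_positive_delete_positive[OF SV aS pos ess]
  have spec: "special_on (S - {a}) x \<longleftrightarrow> special_on S x \<and> x \<noteq> a" for x
    using ess by (auto simp: special_on_def)
  have "neutral_on (S - {a}) x \<longleftrightarrow> neutral_on S x" for x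
  proof (cases "x = a")
    case True
    then show ?thesis
      using pos by (simp add: neutral_on_def)
  qed (rule types(1))
  then have "N_on (S - {a}) = N_on S"
    by (simp add: N_on_def)
  moreover have "positive_on (S - {a}) x \<and> \<not> special_on (S - {a}) x
      \<longleftrightarrow> positive_on S x \<and> \<not> special_on S x" for x
  proof (cases "x = a")
    case True
    then show ?thesis
      using a by (simp add: positive_on_def)
  next
    case False
    then show ?thesis
      using types(2)[OF False] spec by simp
  qed
  then have "P_on (S - {a}) = P_on S"
    by (simp add: P_on_def)
  moreover have "A_on (S - {a}) = A_on S - {a}"
    using spec by (auto simp: A_on_def)
  ultimately show ?thesis
    using pos DD by blast
qed


lemma gallai_edmonds_delete_special:
  assumes SV: "S \<subseteq> V" and a: "special_on S a" and IH: "\<And>v. v \<in> S \<Longrightarrow> gallai_edmonds (S - {v})"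
  shows "gallai_edmonds S"
proof -
  define A where "A = A_on S"
  have aS: "a \<in> S" and aA: "a \<in> A"
    using a by (auto simp: special_on_def A_on_def A_def)
  have fA: "finite A"
    using finite_subset_verts[OF SV] A_on_subset A_def finite_subset by metis
  have "card A > 0"
    using fA aA card_gt_0_iff by blast
  then have cA: "card (A - {a}) + 1 = card A"
    using card_Diff_singleton[OF aA] by simp
  note del = delete_special[OF SV a IH]
  have A': "A_on (S - {a}) = A - {a}"
    using del A_def by simp
  have D: "D_on (S - {a}) = D_on S"
    using del by simp
  have set': "S - {a} - (A - {a}) = S - A"
    using aA by auto
  have "mult_on (S - A) = mult_on (S - {a}) + card (A - {a}) \<and> D_on (S - A) = D_on S \<and>
     N_on (S - A) = N_on (S - {a}) \<and> P_on (S - A) = P_on (S - {a}) \<and> A_on (S - A) = {} \<and>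
     separated (S - A) (D_on S) \<and> mult_on (S - A - D_on S) = 0 \<and>
     (\<forall>K. K \<subseteq> D_on S \<longrightarrow> K \<noteq> {} \<longrightarrow> separated (D_on S) K \<longrightarrow> connected_on K \<longrightarrow> critical_on K)"
    using IH[OF aS] unfolding gallai_edmonds_def A' set' D .
  moreover have "mult_on (S - {a}) = mult_on S + 1" "N_on (S - {a}) = N_on S" "P_on (S - {a}) = P_on S"
    using del by auto
  ultimately show ?thesis
    unfolding gallai_edmonds_def A_def[symmetric] using cA by simp
qed

lemma separated_D_on: "A_on S = {} \<Longrightarrow> separated S (D_on S)"
  unfolding separated_def A_on_def special_on_def D_on_def by (auto simp: essential_on_def)

lemma mult_on_diff_D_on:
  assumes SV: "S \<subseteq> V" and sep: "separated S (D_on S)"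
  shows "mult_on (S - D_on S) = 0"
proof (rule ccontr)
  assume "mult_on (S - D_on S) \<noteq> 0"
  then obtain v where v: "v \<in> S - D_on S" "mult_on (S - D_on S - {v}) + 1 = mult_on (S - D_on S)"
    using exists_essential[of "S - D_on S"] SV by auto
  then have "essential_on (S - D_on S) v"
    by (simp add: essential_on_def)
  then have "essential_on S v"
    using essential_on_separated[of "S - D_on S" S v] separated_complement[OF sep] SV v by auto
  then show False
    using v by (auto simp: D_on_def)
qed

lemma gallai_edmonds_no_special:
  assumes SV: "S \<subseteq> V" and noA: "A_on S = {}" and IH: "\<And>T. T \<subset> S \<Longrightarrow> gallai_edmonds T"
  shows "gallai_edmonds S"
proof -
  define D where "D = D_on S"
  have sepD: "separated S D"
    using separated_D_on[OF noA] D_def by simp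
  have DS: "D \<subseteq> S"
    using D_on_subset D_def by metis
  have "critical_on K" if K: "K \<subseteq> D" "K \<noteq> {}" "separated D K" "connected_on K" for K
  proof -
    have KS: "K \<subseteq> S" and KV: "K \<subseteq> V"
      using K DS SV by auto
    have sepK: "separated S K"
      using separated_trans[OF sepD K(3) K(1)] .
    have ess: "\<forall>v\<in>K. essential_on K v"
    proof
      fix v assume v: "v \<in> K"
      then have "essential_on S v"
        using K(1) D_def by (auto simp: D_on_def)
      then show "essential_on K v"
        using essential_on_separated[OF KS SV sepK v] by simp
    qed
    have "gallai_edmonds (K - {v})" if v: "v \<in> K" for v
    proof -
      have "K - {v} \<subset> S"
        using KS v by auto
      then show ?thesis
        by (rule IH)
    qed
    then have "mult_on K = 1"
      by (rule critical_of_essential_connected[OF KV K(2) K(4) ess])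
    then show ?thesis
      using ess by (simp add: critical_on_def)
  qed
  moreover have "mult_on (S - D) = 0"
    using mult_on_diff_D_on[OF SV] sepD D_def by simp
  ultimately show ?thesis
    unfolding gallai_edmonds_def using noA sepD D_def by simp
qed

theorem gallai_edmonds_holds: "S \<subseteq> V \<Longrightarrow> gallai_edmonds S"
proof (induct "card S" arbitrary: S rule: less_induct)
  case less
  have IH: "gallai_edmonds T" if T: "T \<subset> S" for T
  proof -
    have "card T < card S"
      using psubset_card_mono[OF finite_subset_verts[OF less(2)] T] .
    moreover have "T \<subseteq> V"
      using T less(2) by blast
    ultimately show ?thesis
      using less(1) by blast
  qed
  show ?case
  proof (cases "A_on S = {}")
    case True
    then show ?thesis
      using gallai_edmonds_no_special[OF less(2) _ IH] by blast
  next
    case False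
    then obtain a where "special_on S a"
      by (auto simp: A_on_def)
    moreover have "gallai_edmonds (S - {v})" if "v \<in> S" for v
      using IH that by blast
    ultimately show ?thesis
      using gallai_edmonds_delete_special[OF less(2)] by blast
  qed
qed

section \<open>Components\<close>

lemma adj_on_reach_mono: "(adj_on B)\<^sup>*\<^sup>* x y \<Longrightarrow> B \<subseteq> T \<Longrightarrow> (adj_on T)\<^sup>*\<^sup>* x y"
proof (induct rule: rtranclp_induct)
  case (step y z)
  then have "adj_on T y z"
    by (auto simp: adj_on_def)
  then show ?case
    using step by (auto intro: rtranclp.rtrancl_into_rtrancl)
qed simp

lemma comp_of_separated:
  assumes "B \<subseteq> T" "separated T B" "y \<in> B"
  shows "comp_of B y = comp_of T y"
proof
  show "comp_of B y \<subseteq> comp_of T y"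
    using adj_on_reach_mono assms(1) by (auto simp: comp_of_def)
next
  show "comp_of T y \<subseteq> comp_of B y"
  proof
    fix z assume "z \<in> comp_of T y"
    then have "(adj_on T)\<^sup>*\<^sup>* y z"
      by (auto simp: comp_of_def)
    then have "z \<in> B \<and> (adj_on B)\<^sup>*\<^sup>* y z"
    proof (induct rule: rtranclp_induct)
      case (step a b)
      then have aB: "a \<in> B" and "b \<in> T" "{a, b} \<in> E"
        by (auto simp: adj_on_def)
      then have "b \<in> B"
        using assms(2) unfolding separated_def by blast
      then have "adj_on B a b"
        using aB \<open>{a, b} \<in> E\<close> by (simp add: adj_on_def)
      then show ?case
        using step(3) \<open>b \<in> B\<close> by (auto intro: rtranclp.rtrancl_into_rtrancl)
    qed (use assms(3) in simp)
    then show "z \<in> comp_of B y"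
      by (auto simp: comp_of_def)
  qed
qed

lemma comp_of_eq: "y \<in> comp_of T x \<Longrightarrow> comp_of T y = comp_of T x"
proof -
  assume "y \<in> comp_of T x"
  then have xy: "(adj_on T)\<^sup>*\<^sup>* x y"
    by (auto simp: comp_of_def)
  show ?thesis
    unfolding comp_of_def using xy adj_on_reach_sym[OF xy] by (auto intro: rtranclp_trans)
qed

definition comps_on :: "'a set \<Rightarrow> 'a set set" where
  "comps_on T = {C. \<exists>v\<in>T. C = comp_of T v}"

lemma finite_comps_on: "T \<subseteq> V \<Longrightarrow> finite (comps_on T)"
proof -
  assume "T \<subseteq> V"
  then have "finite (Pow T)"
    using finite_subset_verts by simp
  moreover have "comps_on T \<subseteq> Pow T"
    using comp_of_subset by (auto simp: comps_on_def)
  ultimately show ?thesis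
    using finite_subset by blast
qed

lemma comps_on_delete_component:
  assumes "x \<in> T"
  shows "comps_on (T - comp_of T x) = comps_on T - {comp_of T x}"
proof
  have sep: "separated T (T - comp_of T x)"
    using separated_complement[OF separated_comp_of] .
  show "comps_on (T - comp_of T x) \<subseteq> comps_on T - {comp_of T x}"
  proof
    fix C assume "C \<in> comps_on (T - comp_of T x)"
    then obtain y where y: "y \<in> T - comp_of T x" "C = comp_of (T - comp_of T x) y"
      by (auto simp: comps_on_def)
    then have "C = comp_of T y"
      using comp_of_separated[OF _ sep] by simp
    then show "C \<in> comps_on T - {comp_of T x}"
      using y(1) comp_of_self by (auto simp: comps_on_def)
  qed
  show "comps_on T - {comp_of T x} \<subseteq> comps_on (T - comp_of T x)"
  proof
    fix C assume "C \<in> comps_on T - {comp_of T x}"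
    then obtain y where y: "y \<in> T" "C = comp_of T y" "C \<noteq> comp_of T x"
      by (auto simp: comps_on_def)
    then have "y \<notin> comp_of T x"
      using comp_of_eq by blast
    then have "C = comp_of (T - comp_of T x) y"
      using comp_of_separated[OF _ sep, of y] y by simp
    then show "C \<in> comps_on (T - comp_of T x)"
      using y \<open>y \<notin> comp_of T x\<close> by (auto simp: comps_on_def)
  qed
qed

lemma mult_on_sum_comps: "T \<subseteq> V \<Longrightarrow> mult_on T = (\<Sum>C\<in>comps_on T. mult_on C)"
proof (induct "card T" arbitrary: T rule: less_induct)
  case less
  show ?case
  proof (cases "T = {}")
    case True
    then show ?thesis
      by (simp add: comps_on_def mult_on_def eta_on_empty)
  next
    case False
    then obtain x where x: "x \<in> T"
      by blast
    define C0 where "C0 = comp_of T x"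
    have "mult_on T = mult_on C0 + mult_on (T - C0)"
      using mult_on_separated[OF comp_of_subset less(2) separated_comp_of] C0_def by simp
    moreover have "card (T - C0) < card T"
      using finite_subset_verts[OF less(2)] x comp_of_self[OF x] C0_def by (intro psubset_card_mono) auto
    then have "mult_on (T - C0) = (\<Sum>C\<in>comps_on (T - C0). mult_on C)"
      using less(1)[of "T - C0"] less(2) by blast
    then have "mult_on (T - C0) = (\<Sum>C\<in>comps_on T - {C0}. mult_on C)"
      using comps_on_delete_component[OF x] C0_def by simp
    moreover have "C0 \<in> comps_on T"
      using x C0_def by (auto simp: comps_on_def)
    ultimately show ?thesis
      using sum.remove[OF finite_comps_on[OF less(2)], of C0 mult_on] by simp
  qed
qed


lemma comps_on_subset: "C \<in> comps_on T \<Longrightarrow> C \<subseteq> T"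
  using comp_of_subset by (auto simp: comps_on_def)

lemma comp_critical_or_null:
  assumes SV: "S \<subseteq> V" and C: "C \<in> comps_on (S - A_on S)"
  shows "(C \<subseteq> D_on S \<and> critical_on C) \<or> (C \<inter> D_on S = {} \<and> mult_on C = 0)"
proof -
  define T where "T = S - A_on S"
  define D where "D = D_on S"
  have GE: "D_on T = D" "separated T D" "mult_on (T - D) = 0"
      "\<And>K. K \<subseteq> D \<Longrightarrow> K \<noteq> {} \<Longrightarrow> separated D K \<Longrightarrow> connected_on K \<Longrightarrow> critical_on K"
    using gallai_edmonds_holds[OF SV] unfolding gallai_edmonds_def T_def D_def by auto
  have DT: "D \<subseteq> T"
    using GE(1) D_on_subset by metis
  obtain x where x: "x \<in> T" "C = comp_of T x"
    using C T_def by (auto simp: comps_on_def)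
  have CT: "C \<subseteq> T" and xC: "x \<in> C" and sepC: "separated T C" and conn: "connected_on C"
    using comp_of_subset comp_of_self separated_comp_of connected_on_comp_of x by auto
  show ?thesis
  proof (cases "C \<inter> D = {}")
    case False
    have "separated C (C \<inter> D)"
      using GE(2) CT unfolding separated_def by blast
    then have CD: "C \<subseteq> D"
      using conn False unfolding connected_on_def by blast
    then have "separated D C"
      using sepC DT unfolding separated_def by blast
    then show ?thesis
      using GE(4)[OF CD] xC conn CD D_def by blast
  next
    case True
    then have "C \<subseteq> T - D" "separated (T - D) C"
      using CT sepC unfolding separated_def by blast+
    then have "mult_on (T - D) = mult_on C + mult_on (T - D - C)"
      using mult_on_separated SV T_def by blast
    then show ?thesis
      using GE(3) True D_def by simp
  qed
qed

lemma critical_comp_iff: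
  assumes "S \<subseteq> V" "C \<in> comps_on (S - A_on S)"
  shows "critical_on C \<longleftrightarrow> C \<subseteq> D_on S"
proof -
  obtain x where "x \<in> S - A_on S" "C = comp_of (S - A_on S) x"
    using assms(2) by (auto simp: comps_on_def)
  then have "C \<noteq> {}"
    using comp_of_self by blast
  then show ?thesis
    using comp_critical_or_null[OF assms] by (auto simp: critical_on_def)
qed

lemma comps_on_D_on:
  assumes SV: "S \<subseteq> V"
  shows "comps_on (D_on S) = {C \<in> comps_on (S - A_on S). critical_on C}"
proof -
  define T where "T = S - A_on S"
  have sep: "separated T (D_on S)" and DT: "D_on S \<subseteq> T"
    using gallai_edmonds_holds[OF SV] D_on_subset unfolding gallai_edmonds_def T_def by metis+
  have comp_eq: "comp_of (D_on S) y = comp_of T y" if "y \<in> D_on S" for y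
    using comp_of_separated[OF DT sep that] .
  have crit: "critical_on (comp_of T y) \<longleftrightarrow> comp_of T y \<subseteq> D_on S" if "y \<in> T" for y
    using critical_comp_iff[OF SV, of "comp_of T y"] that T_def by (auto simp: comps_on_def)
  show ?thesis
  proof (intro set_eqI iffI)
    fix C assume "C \<in> comps_on (D_on S)"
    then obtain y where y: "y \<in> D_on S" "C = comp_of (D_on S) y"
      by (auto simp: comps_on_def)
    then have "C = comp_of T y" "y \<in> T"
      using comp_eq DT by auto
    moreover have "C \<subseteq> D_on S"
      using y comp_of_subset by simp
    ultimately show "C \<in> {C \<in> comps_on (S - A_on S). critical_on C}"
      using crit T_def by (auto simp: comps_on_def)
  next
    fix C assume "C \<in> {C \<in> comps_on (S - A_on S). critical_on C}"
    then obtain y where y: "y \<in> T" "C = comp_of T y" "critical_on C"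
      using T_def by (auto simp: comps_on_def)
    then have "y \<in> D_on S"
      using crit comp_of_self by blast
    then show "C \<in> comps_on (D_on S)"
      using comp_eq y(2) by (auto simp: comps_on_def)
  qed
qed

lemma card_critical_comps:
  assumes SV: "S \<subseteq> V"
  shows "card {C \<in> comps_on (S - A_on S). critical_on C} = card (A_on S) + mult_on S"
proof -
  define T where "T = S - A_on S"
  define D where "D = D_on S"
  have GE: "mult_on T = mult_on S + card (A_on S)" "D_on T = D" "separated T D" "mult_on (T - D) = 0"
    using gallai_edmonds_holds[OF SV] unfolding gallai_edmonds_def T_def D_def by auto
  have DT: "D \<subseteq> T" and TV: "T \<subseteq> V"
    using GE(2) D_on_subset SV T_def by auto
  have "mult_on D = mult_on S + card (A_on S)"
    using mult_on_separated[OF DT TV GE(3)] GE(1,4) by simp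
  moreover have "mult_on D = (\<Sum>C\<in>comps_on D. mult_on C)"
    using mult_on_sum_comps DT TV by blast
  moreover have "(\<Sum>C\<in>comps_on D. mult_on C) = card (comps_on D)"
    using comps_on_D_on[OF SV] D_def by (simp add: critical_on_def)
  ultimately show ?thesis
    using comps_on_D_on[OF SV] D_def T_def by simp
qed


lemma induced_verts: "induced G V = G"
proof -
  have "{e \<in> E. e \<subseteq> V} = E"
    using edge_doubleton by auto
  then show ?thesis
    by (simp add: induced_def verts_def edges_def)
qed

lemma verts_induced_subset: "S \<subseteq> V \<Longrightarrow> verts (induced G S) = S"
  by (auto simp: verts_induced)

lemma del_set_induced: "S \<subseteq> V \<Longrightarrow> del_set (induced G S) A = induced G (S - A)"
  by (simp add: del_set_def induced_induced verts_induced_subset Int_absorb1 Diff_subset)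

lemma mult_induced: "mult w w1 th (induced G S) = mult_on S"
  by (simp add: mult_def mult_on_def eta_on_def)

lemma essential_induced: "S \<subseteq> V \<Longrightarrow> essential w w1 th (induced G S) v \<longleftrightarrow> essential_on S v"
  by (auto simp: essential_def essential_on_def verts_induced_subset del_vert_def del_set_induced
      mult_induced)

lemma neutral_induced: "S \<subseteq> V \<Longrightarrow> neutral w w1 th (induced G S) v \<longleftrightarrow> neutral_on S v"
  by (auto simp: neutral_def neutral_on_def verts_induced_subset del_vert_def del_set_induced
      mult_induced)

lemma positive_induced: "S \<subseteq> V \<Longrightarrow> positive w w1 th (induced G S) v \<longleftrightarrow> positive_on S v"
  by (auto simp: positive_def positive_on_def verts_induced_subset del_vert_def del_set_induced
      mult_induced)

lemma adj_induced: "adj (induced G S) = adj_on S"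
  by (auto simp: adj_def adj_on_def edges_induced fun_eq_iff)

lemma special_induced: "S \<subseteq> V \<Longrightarrow> special w w1 th (induced G S) v \<longleftrightarrow> special_on S v"
  unfolding special_def special_on_def adj_induced verts_induced_subset
  by (auto simp: essential_induced adj_on_def essential_on_def)

lemma Dset_induced: "S \<subseteq> V \<Longrightarrow> Dset w w1 th (induced G S) = D_on S"
  by (simp add: Dset_def D_on_def essential_induced)

lemma Aset_induced: "S \<subseteq> V \<Longrightarrow> Aset w w1 th (induced G S) = A_on S"
  by (simp add: Aset_def A_on_def special_induced)

lemma Nset_induced: "S \<subseteq> V \<Longrightarrow> Nset w w1 th (induced G S) = N_on S"
  by (simp add: Nset_def N_on_def neutral_induced)

lemma Pset_induced: "S \<subseteq> V \<Longrightarrow> Pset w w1 th (induced G S) = P_on S"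
  by (simp add: Pset_def P_on_def positive_induced special_induced)

lemma critical_induced: "S \<subseteq> V \<Longrightarrow> critical w w1 th (induced G S) \<longleftrightarrow> critical_on S"
  by (simp add: critical_def critical_on_def verts_induced_subset essential_induced mult_induced)

lemma components_induced: "S \<subseteq> V \<Longrightarrow> components (induced G S) = comps_on S"
  by (simp add: components_def comps_on_def verts_induced_subset adj_induced comp_of_def)

lemma critical_components_del_set:
  assumes "S \<subseteq> V"
  shows "{C \<in> components (del_set (induced G S) (A_on S)).
            critical w w1 th (induced (del_set (induced G S) (A_on S)) C)}
         = {C \<in> comps_on (S - A_on S). critical_on C}"
proof -
  have "induced (induced G (S - A_on S)) C = induced G C" if "C \<in> comps_on (S - A_on S)" for C
    using comps_on_subset[OF that] by (simp add: induced_induced Int_absorb1)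
  moreover have "C \<subseteq> V" if "C \<in> comps_on (S - A_on S)" for C
    using comps_on_subset[OF that] assms by blast
  moreover have "components (induced G (S - A_on S)) = comps_on (S - A_on S)"
    using assms by (intro components_induced) auto
  ultimately show ?thesis
    using assms by (auto simp: del_set_induced critical_induced)
qed


lemma corollary_induced:
  assumes SV: "S \<subseteq> V"
  defines "H \<equiv> induced G S"
  defines "A \<equiv> Aset w w1 th H"
  shows "(Aset w w1 th (del_set H A) = {} \<and> Dset w w1 th (del_set H A) = Dset w w1 th H \<and>
         Pset w w1 th (del_set H A) = Pset w w1 th H \<and> Nset w w1 th (del_set H A) = Nset w w1 th H) \<and>
         (card {C \<in> components (del_set H A). critical w w1 th (induced (del_set H A) C)}
           = card A + mult w w1 th H) \<and>
         (\<forall>C \<in> components (del_set H A).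
           critical w w1 th (induced (del_set H A) C) \<or> mult w w1 th (induced (del_set H A) C) = 0) \<and>
         (components (induced G (Dset w w1 th H))
           = {C \<in> components (del_set H A). critical w w1 th (induced (del_set H A) C)})"
proof -
  define T where "T = S - A_on S"
  have A: "A = A_on S" and TV: "T \<subseteq> V" and DV: "D_on S \<subseteq> V"
    using Aset_induced[OF SV] SV D_on_subset A_def H_def T_def by auto
  have del: "del_set H A = induced G T"
    using del_set_induced[OF SV] A H_def T_def by simp
  have ind: "induced (del_set H A) C = induced G C" and CV: "C \<subseteq> V" if "C \<in> comps_on T" for C
    using comps_on_subset[OF that] TV by (auto simp: del Int_absorb1 induced_induced)
  have comps: "components (del_set H A) = comps_on T"
    using components_induced[OF TV] del by simp
  have crit: "{C \<in> components (del_set H A). critical w w1 th (induced (del_set H A) C)}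
      = {C \<in> comps_on T. critical_on C}"
    using critical_components_del_set[OF SV] A H_def T_def by simp
  have "A_on T = {}" "D_on T = D_on S" "P_on T = P_on S" "N_on T = N_on S"
    using gallai_edmonds_holds[OF SV] by (simp_all add: gallai_edmonds_def T_def)
  then have part_a: "Aset w w1 th (del_set H A) = {} \<and> Dset w w1 th (del_set H A) = Dset w w1 th H \<and>
      Pset w w1 th (del_set H A) = Pset w w1 th H \<and> Nset w w1 th (del_set H A) = Nset w w1 th H"
    unfolding del using SV TV by (simp add: H_def Aset_induced Dset_induced Pset_induced Nset_induced)
  have part_b: "card {C \<in> comps_on T. critical_on C} = card A + mult w w1 th H"
    using card_critical_comps[OF SV] A T_def H_def by (simp add: mult_induced)
  have part_c: "critical w w1 th (induced (del_set H A) C) \<or> mult w w1 th (induced (del_set H A) C) = 0"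
    if C: "C \<in> comps_on T" for C
  proof -
    have "critical_on C \<or> mult_on C = 0"
      using comp_critical_or_null[OF SV, of C] C T_def by auto
    then show ?thesis
      using ind[OF C] critical_induced[OF CV[OF C]] by (simp add: mult_induced)
  qed
  have part_d: "components (induced G (Dset w w1 th H)) = {C \<in> comps_on T. critical_on C}"
    using comps_on_D_on[OF SV] components_induced[OF DV] Dset_induced[OF SV] T_def H_def by simp
  show ?thesis
    unfolding crit unfolding comps using part_a part_b part_c part_d by (intro conjI ballI) simp_all
qed

end

theorem corollary5p14:
  fixes G :: "'a graph" and w :: "'a set \<Rightarrow> complex" and w1 :: "'a \<Rightarrow> real"
    and \<theta> :: real
  assumes "simple_graph G" and "edge_weight G w"
  defines "A \<equiv> Aset w w1 \<theta> G"
  shows "(Aset w w1 \<theta> (del_set G A) = {} \<and>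
         Dset w w1 \<theta> (del_set G A) = Dset w w1 \<theta> G \<and>
         Pset w w1 \<theta> (del_set G A) = Pset w w1 \<theta> G \<and>
         Nset w w1 \<theta> (del_set G A) = Nset w w1 \<theta> G) \<and>
         (card {C \<in> components (del_set G A). critical w w1 \<theta> (induced (del_set G A) C)}
           = card A + mult w w1 \<theta> G) \<and>
         (\<forall>C \<in> components (del_set G A).
           critical w w1 \<theta> (induced (del_set G A) C) \<or>
           mult w w1 \<theta> (induced (del_set G A) C) = 0) \<and>
         (components (induced G (Dset w w1 \<theta> G))
           = {C \<in> components (del_set G A). critical w w1 \<theta> (induced (del_set G A) C)})"
proof -
  interpret weighted_graph G w w1 \<theta>
    using assms(1,2) by unfold_locales
  show ?thesis
    using corollary_induced[of "verts G"] unfolding induced_verts A_def by simp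
qed

end
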